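(* Let $\Lambda$ be a selfinjective artin algebra of infinite representation type with $\operatorname{rad}^3\Lambda=0$, let $A=\Lambda/\operatorname{Soc}\Lambda$, and let $F\colon\operatorname{mod}A\to\operatorname{mod}H$ be the functor described in the context. Let $0\to C\xrightarrow{\alpha}B\xrightarrow{\beta}S\to 0$ be a short exact sequence in $\operatorname{mod}A$ with $S$ a simple $\Lambda$-module. If $C$ does not contain any simple direct summand, then the sequence $0\to F(C)\to F(B)\to F(S)\to 0$ is also exact.
   Context: Here $\operatorname{rad}^2A=0$. Let $\mathfrak r_A$ be the radical of $A$ and $\bar A=A/\mathfrak r_A$. $H$ is the hereditary triangular matrix algebra $H=\begin{pmatrix}\bar A&0\\ \mathfrak r_A&\bar A\end{pmatrix}$, whose modules are triples $(U,V,f)$ with $U,V$ $\bar A$-modules and $f\colon \mathfrak r_A\otimes_{\bar A}U\to V$ an $\bar A$-homomorphism. The functor $F$ sends an $A$-module $X$ to $(X/\mathfrak r_AX,\ \mathfrak r_AX,\ f_X)$ where $f_X$ is induced by multiplication, and acts on morphisms by the induced maps; it induces an equivalence of stable categories $\underline{\operatorname{mod}}A\simeq\underline{\operatorname{mod}}H$. A sequence of $H$-modules $(U_i,V_i,f_i)$ is exact iff the sequences of $U$-components and of $V$-components are exact. *)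

theory Defs
  imports "HOL-Algebra.Algebra"
begin

text \<open>HOL-Algebra's locale module requires a commutative ring, so we define left
modules over an arbitrary ring L ourselves, reusing the record type module.\<close>

definition lmodule :: "'a ring \<Rightarrow> ('a, 'b) module \<Rightarrow> bool" where
  "lmodule L M \<longleftrightarrow> ring L \<and> abelian_group M \<and>
     (\<forall>a\<in>carrier L. \<forall>x\<in>carrier M. a \<odot>\<^bsub>M\<^esub> x \<in> carrier M) \<and>
     (\<forall>a\<in>carrier L. \<forall>b\<in>carrier L. \<forall>x\<in>carrier M.
        (a \<oplus>\<^bsub>L\<^esub> b) \<odot>\<^bsub>M\<^esub> x = a \<odot>\<^bsub>M\<^esub> x \<oplus>\<^bsub>M\<^esub> b \<odot>\<^bsub>M\<^esub> x) \<and>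
     (\<forall>a\<in>carrier L. \<forall>x\<in>carrier M. \<forall>y\<in>carrier M.
        a \<odot>\<^bsub>M\<^esub> (x \<oplus>\<^bsub>M\<^esub> y) = a \<odot>\<^bsub>M\<^esub> x \<oplus>\<^bsub>M\<^esub> a \<odot>\<^bsub>M\<^esub> y) \<and>
     (\<forall>a\<in>carrier L. \<forall>b\<in>carrier L. \<forall>x\<in>carrier M.
        (a \<otimes>\<^bsub>L\<^esub> b) \<odot>\<^bsub>M\<^esub> x = a \<odot>\<^bsub>M\<^esub> (b \<odot>\<^bsub>M\<^esub> x)) \<and>
     (\<forall>x\<in>carrier M. \<one>\<^bsub>L\<^esub> \<odot>\<^bsub>M\<^esub> x = x)"

definition reg_mod :: "'a ring \<Rightarrow> ('a, 'a) module" where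
  "reg_mod L = \<lparr>carrier = carrier L, monoid.mult = monoid.mult L, monoid.one = monoid.one L,
                ring.zero = ring.zero L, ring.add = ring.add L, smult = monoid.mult L\<rparr>"

definition submodule :: "'a ring \<Rightarrow> ('a, 'b) module \<Rightarrow> 'b set \<Rightarrow> bool" where
  "submodule L M N \<longleftrightarrow> N \<subseteq> carrier M \<and> \<zero>\<^bsub>M\<^esub> \<in> N \<and>
     (\<forall>x\<in>N. \<forall>y\<in>N. x \<oplus>\<^bsub>M\<^esub> y \<in> N) \<and> (\<forall>x\<in>N. a_inv M x \<in> N) \<and>
     (\<forall>a\<in>carrier L. \<forall>x\<in>N. a \<odot>\<^bsub>M\<^esub> x \<in> N)"

definition mod_span :: "'a ring \<Rightarrow> ('a, 'b) module \<Rightarrow> 'b set \<Rightarrow> 'b set" where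
  "mod_span L M Y = Inter {N. submodule L M N \<and> Y \<subseteq> N}"

definition fin_gen :: "'a ring \<Rightarrow> ('a, 'b) module \<Rightarrow> bool" where
  "fin_gen L M \<longleftrightarrow> (\<exists>Y. finite Y \<and> Y \<subseteq> carrier M \<and> mod_span L M Y = carrier M)"

definition set_sum :: "('a, 'b) module \<Rightarrow> 'b set \<Rightarrow> 'b set \<Rightarrow> 'b set" where
  "set_sum M N1 N2 = {x \<oplus>\<^bsub>M\<^esub> y | x y. x \<in> N1 \<and> y \<in> N2}"

definition direct_decomp :: "'a ring \<Rightarrow> ('a, 'b) module \<Rightarrow> 'b set \<Rightarrow> 'b set \<Rightarrow> bool" where
  "direct_decomp L M N1 N2 \<longleftrightarrow> submodule L M N1 \<and> submodule L M N2 \<and>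
     N1 \<inter> N2 = {\<zero>\<^bsub>M\<^esub>} \<and> set_sum M N1 N2 = carrier M"

definition simple_mod :: "'a ring \<Rightarrow> ('a, 'b) module \<Rightarrow> bool" where
  "simple_mod L M \<longleftrightarrow> lmodule L M \<and> carrier M \<noteq> {\<zero>\<^bsub>M\<^esub>} \<and>
     (\<forall>N. submodule L M N \<longrightarrow> N = {\<zero>\<^bsub>M\<^esub>} \<or> N = carrier M)"

definition indecomposable :: "'a ring \<Rightarrow> ('a, 'b) module \<Rightarrow> bool" where
  "indecomposable L M \<longleftrightarrow> lmodule L M \<and> carrier M \<noteq> {\<zero>\<^bsub>M\<^esub>} \<and>
     (\<forall>N1 N2. direct_decomp L M N1 N2 \<longrightarrow> N1 = {\<zero>\<^bsub>M\<^esub>} \<or> N2 = {\<zero>\<^bsub>M\<^esub>})"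

definition mod_hom :: "'a ring \<Rightarrow> ('a, 'b) module \<Rightarrow> ('a, 'c) module \<Rightarrow> ('b \<Rightarrow> 'c) \<Rightarrow> bool" where
  "mod_hom L M N f \<longleftrightarrow> f \<in> carrier M \<rightarrow> carrier N \<and>
     (\<forall>x\<in>carrier M. \<forall>y\<in>carrier M. f (x \<oplus>\<^bsub>M\<^esub> y) = f x \<oplus>\<^bsub>N\<^esub> f y) \<and>
     (\<forall>a\<in>carrier L. \<forall>x\<in>carrier M. f (a \<odot>\<^bsub>M\<^esub> x) = a \<odot>\<^bsub>N\<^esub> f x)"

definition mod_iso :: "'a ring \<Rightarrow> ('a, 'b) module \<Rightarrow> ('a, 'c) module \<Rightarrow> bool" where
  "mod_iso L M N \<longleftrightarrow> (\<exists>f. mod_hom L M N f \<and> bij_betw f (carrier M) (carrier N))"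

definition left_ideal :: "'a ring \<Rightarrow> 'a set \<Rightarrow> bool" where
  "left_ideal L I \<longleftrightarrow> submodule L (reg_mod L) I"

definition maximal_left_ideal :: "'a ring \<Rightarrow> 'a set \<Rightarrow> bool" where
  "maximal_left_ideal L I \<longleftrightarrow> left_ideal L I \<and> I \<noteq> carrier L \<and>
     (\<forall>J. left_ideal L J \<and> I \<subseteq> J \<longrightarrow> J = I \<or> J = carrier L)"

definition jac_rad :: "'a ring \<Rightarrow> 'a set" where
  "jac_rad L = carrier L \<inter> Inter {I. maximal_left_ideal L I}"

definition simple_submodule :: "'a ring \<Rightarrow> ('a, 'b) module \<Rightarrow> 'b set \<Rightarrow> bool" where
  "simple_submodule L M N \<longleftrightarrow> submodule L M N \<and> N \<noteq> {\<zero>\<^bsub>M\<^esub>} \<and>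
     (\<forall>N'. submodule L M N' \<and> N' \<subseteq> N \<longrightarrow> N' = {\<zero>\<^bsub>M\<^esub>} \<or> N' = N)"

definition socle :: "'a ring \<Rightarrow> 'a set" where
  "socle L = mod_span L (reg_mod L) (Union {N. simple_submodule L (reg_mod L) N})"

definition artinian_cring :: "'a ring \<Rightarrow> bool" where
  "artinian_cring R \<longleftrightarrow> cring R \<and>
     (\<forall>I :: nat \<Rightarrow> 'a set. (\<forall>n. ideal (I n) R \<and> I (Suc n) \<subseteq> I n) \<longrightarrow>
        (\<exists>m. \<forall>n\<ge>m. I n = I m))"

definition artin_algebra :: "'a ring \<Rightarrow> bool" where
  "artin_algebra L \<longleftrightarrow> ring L \<and>
     (\<exists>Z. subring Z L \<and> (\<forall>z\<in>Z. \<forall>x\<in>carrier L. z \<otimes>\<^bsub>L\<^esub> x = x \<otimes>\<^bsub>L\<^esub> z) \<and>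
        artinian_cring (L\<lparr>carrier := Z\<rparr>) \<and>
        (\<exists>G. finite G \<and> G \<subseteq> carrier L \<and>
           (\<forall>x\<in>carrier L. \<exists>c\<in>G \<rightarrow> Z. x = finsum L (\<lambda>g. c g \<otimes>\<^bsub>L\<^esub> g) G)))"

text \<open>Every finitely generated
L-module is isomorphic to one with carrier contained in \<open>'a list\<close> (a quotient of some
\<open>L^n\<close>), so test modules range over that carrier type.\<close>
definition selfinjective :: "'a ring \<Rightarrow> bool" where
  "selfinjective L \<longleftrightarrow>
     (\<forall>(M :: ('a, 'a list) module) (N :: ('a, 'a list) module) f g.
        lmodule L M \<and> fin_gen L M \<and> lmodule L N \<and> fin_gen L N \<and>
        mod_hom L M N f \<and> inj_on f (carrier M) \<and> mod_hom L M (reg_mod L) g \<longrightarrow>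
        (\<exists>h. mod_hom L N (reg_mod L) h \<and> (\<forall>x\<in>carrier M. h (f x) = g x)))"

definition infinite_rep_type :: "'a ring \<Rightarrow> bool" where
  "infinite_rep_type L \<longleftrightarrow>
     (\<exists>K :: ('a, 'a list) module set. infinite K \<and>
        (\<forall>M\<in>K. fin_gen L M \<and> indecomposable L M) \<and>
        (\<forall>M\<in>K. \<forall>N\<in>K. M \<noteq> N \<longrightarrow> \<not> mod_iso L M N))"

text \<open>An A-module (A = L/Soc L) is a finitely generated L-module annihilated by Soc L.\<close>
definition A_module :: "'a ring \<Rightarrow> ('a, 'b) module \<Rightarrow> bool" where
  "A_module L M \<longleftrightarrow> lmodule L M \<and> fin_gen L M \<and>
     (\<forall>s\<in>socle L. \<forall>x\<in>carrier M. s \<odot>\<^bsub>M\<^esub> x = \<zero>\<^bsub>M\<^esub>)"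

text \<open>\<open>r_A Y\<close> for an A-module Y; since \<open>rad A = (rad L + Soc L)/Soc L\<close> and
\<open>Soc L\<close> kills Y, this is \<open>(rad L) Y\<close>.\<close>
definition radA_mod :: "'a ring \<Rightarrow> ('a, 'b) module \<Rightarrow> 'b set" where
  "radA_mod L Y = mod_span L Y {r \<odot>\<^bsub>Y\<^esub> x | r x. r \<in> jac_rad L \<and> x \<in> carrier Y}"

text \<open>\<open>F Y = (Y / r_A Y, r_A Y, f_X)\<close>.  A sequence of H-modules is exact iff the
sequences of U- and V-components are exact.  U-component of
\<open>0 \<rightarrow> F C \<rightarrow> F B \<rightarrow> F S \<rightarrow> 0\<close>: \<open>0 \<rightarrow> C/rC \<rightarrow> B/rB \<rightarrow> S/rS \<rightarrow> 0\<close> with the maps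
induced by \<open>\<alpha>, \<beta>\<close>, written out on representatives.\<close>
definition F_U_exact :: "'a ring \<Rightarrow> ('a, 'c) module \<Rightarrow> ('a, 'b) module \<Rightarrow> ('a, 's) module
    \<Rightarrow> ('c \<Rightarrow> 'b) \<Rightarrow> ('b \<Rightarrow> 's) \<Rightarrow> bool" where
  "F_U_exact L C B S \<alpha> \<beta> \<longleftrightarrow>
     (\<forall>c\<in>carrier C. \<alpha> c \<in> radA_mod L B \<longrightarrow> c \<in> radA_mod L C) \<and>
     (\<forall>c\<in>carrier C. \<beta> (\<alpha> c) \<in> radA_mod L S) \<and>
     (\<forall>b\<in>carrier B. \<beta> b \<in> radA_mod L S \<longrightarrow>
        (\<exists>c\<in>carrier C. b \<ominus>\<^bsub>B\<^esub> \<alpha> c \<in> radA_mod L B)) \<and>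
     (\<forall>s\<in>carrier S. \<exists>b\<in>carrier B. s \<ominus>\<^bsub>S\<^esub> \<beta> b \<in> radA_mod L S)"

text \<open>V-component: \<open>0 \<rightarrow> r_A C \<rightarrow> r_A B \<rightarrow> r_A S \<rightarrow> 0\<close> with the restricted maps.\<close>
definition F_V_exact :: "'a ring \<Rightarrow> ('a, 'c) module \<Rightarrow> ('a, 'b) module \<Rightarrow> ('a, 's) module
    \<Rightarrow> ('c \<Rightarrow> 'b) \<Rightarrow> ('b \<Rightarrow> 's) \<Rightarrow> bool" where
  "F_V_exact L C B S \<alpha> \<beta> \<longleftrightarrow>
     (\<forall>c\<in>radA_mod L C. \<alpha> c = \<zero>\<^bsub>B\<^esub> \<longrightarrow> c = \<zero>\<^bsub>C\<^esub>) \<and>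
     (\<forall>c\<in>radA_mod L C. \<beta> (\<alpha> c) = \<zero>\<^bsub>S\<^esub>) \<and>
     (\<forall>b\<in>radA_mod L B. \<beta> b = \<zero>\<^bsub>S\<^esub> \<longrightarrow> (\<exists>c\<in>radA_mod L C. \<alpha> c = b)) \<and>
     (\<forall>s\<in>radA_mod L S. \<exists>b\<in>radA_mod L B. \<beta> b = s)"

definition F_exact :: "'a ring \<Rightarrow> ('a, 'c) module \<Rightarrow> ('a, 'b) module \<Rightarrow> ('a, 's) module
    \<Rightarrow> ('c \<Rightarrow> 'b) \<Rightarrow> ('b \<Rightarrow> 's) \<Rightarrow> bool" where
  "F_exact L C B S \<alpha> \<beta> \<longleftrightarrow> F_U_exact L C B S \<alpha> \<beta> \<and> F_V_exact L C B S \<alpha> \<beta>"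

definition short_exact :: "'a ring \<Rightarrow> ('a, 'c) module \<Rightarrow> ('a, 'b) module \<Rightarrow> ('a, 's) module
    \<Rightarrow> ('c \<Rightarrow> 'b) \<Rightarrow> ('b \<Rightarrow> 's) \<Rightarrow> bool" where
  "short_exact L C B S \<alpha> \<beta> \<longleftrightarrow> mod_hom L C B \<alpha> \<and> mod_hom L B S \<beta> \<and>
     inj_on \<alpha> (carrier C) \<and> \<beta> ` carrier B = carrier S \<and>
     \<alpha> ` carrier C = {b\<in>carrier B. \<beta> b = \<zero>\<^bsub>S\<^esub>}"

end

theory Submission
  imports Defs
begin

text \<open>Since \<open>rad\<^sup>3 \<Lambda> = 0\<close>, the square of the radical lies in the socle, so on an \<open>A\<close>-module the
  radical kills \<open>rad B\<close>. Hence if \<open>\<alpha> c \<in> rad B\<close>, injectivity of \<open>\<alpha>\<close> shows that \<open>rad \<Lambda>\<close> kills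
  \<open>c\<close>. If moreover \<open>c \<notin> rad C\<close>, semisimplicity of \<open>\<Lambda> / rad \<Lambda>\<close> (an artin algebra is left
  artinian) yields \<open>d \<in> \<Lambda> c\<close> outside \<open>rad C\<close> generating a simple submodule, and a submodule
  containing \<open>rad C\<close> that is maximal with respect to avoiding \<open>d\<close> is a complement of \<open>\<Lambda> d\<close>, so
  \<open>C\<close> would have a simple summand. Thus \<open>\<alpha>\<close> reflects the radical; as \<open>rad S = 0\<close>, this is all
  that exactness of the two component sequences requires.\<close>

lemma reg_mod_simps[simp]: "carrier (reg_mod L) = carrier L" "add (reg_mod L) = add L"
  "ring.zero (reg_mod L) = ring.zero L" "smult (reg_mod L) = monoid.mult L"
  by (simp_all add: reg_mod_def)

lemma reg_mod_a_inv[simp]: "a_inv (reg_mod L) = a_inv L"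
  by (rule ext) (simp add: a_inv_def m_inv_def reg_mod_def)

lemma left_ideal_iff: "left_ideal L I \<longleftrightarrow> I \<subseteq> carrier L \<and> \<zero>\<^bsub>L\<^esub> \<in> I \<and>
    (\<forall>x\<in>I. \<forall>y\<in>I. x \<oplus>\<^bsub>L\<^esub> y \<in> I) \<and> (\<forall>x\<in>I. \<ominus>\<^bsub>L\<^esub> x \<in> I) \<and>
    (\<forall>a\<in>carrier L. \<forall>x\<in>I. a \<otimes>\<^bsub>L\<^esub> x \<in> I)"
  by (simp add: left_ideal_def submodule_def)

lemma a_inv_restrict_carrier:
  assumes G: "abelian_group G" and H: "H \<subseteq> carrier G" and x: "x \<in> H" and nx: "\<ominus>\<^bsub>G\<^esub> x \<in> H"
  shows "a_inv (G\<lparr>carrier := H\<rparr>) x = \<ominus>\<^bsub>G\<^esub> x"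
proof -
  interpret G: abelian_group G by (rule G)
  have xc: "x \<in> carrier G" using x H by blast
  have "a_inv (G\<lparr>carrier := H\<rparr>) x = (THE y. y \<in> H \<and> x \<oplus>\<^bsub>G\<^esub> y = \<zero>\<^bsub>G\<^esub> \<and> y \<oplus>\<^bsub>G\<^esub> x = \<zero>\<^bsub>G\<^esub>)"
    by (simp add: a_inv_def m_inv_def)
  also have "\<dots> = \<ominus>\<^bsub>G\<^esub> x"
  proof (rule the_equality)
    show "\<ominus>\<^bsub>G\<^esub> x \<in> H \<and> x \<oplus>\<^bsub>G\<^esub> \<ominus>\<^bsub>G\<^esub> x = \<zero>\<^bsub>G\<^esub> \<and> \<ominus>\<^bsub>G\<^esub> x \<oplus>\<^bsub>G\<^esub> x = \<zero>\<^bsub>G\<^esub>"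
      using nx G.r_neg[OF xc] G.l_neg[OF xc] by blast
    fix y assume "y \<in> H \<and> x \<oplus>\<^bsub>G\<^esub> y = \<zero>\<^bsub>G\<^esub> \<and> y \<oplus>\<^bsub>G\<^esub> x = \<zero>\<^bsub>G\<^esub>"
    then show "y = \<ominus>\<^bsub>G\<^esub> x" using xc H by (metis G.minus_equality subsetD)
  qed
  finally show ?thesis .
qed

locale lmod =
  fixes L :: "'a ring" and M :: "('a,'b) module"
  assumes lm: "lmodule L M"
begin

sublocale R: ring L using lm by (simp add: lmodule_def)
sublocale M: abelian_group M using lm by (simp add: lmodule_def)

lemma smult_closed[simp,intro]: "a \<in> carrier L \<Longrightarrow> x \<in> carrier M \<Longrightarrow> a \<odot>\<^bsub>M\<^esub> x \<in> carrier M"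
  using lm by (simp add: lmodule_def)

lemma smult_l_distr: "a \<in> carrier L \<Longrightarrow> b \<in> carrier L \<Longrightarrow> x \<in> carrier M \<Longrightarrow>
    (a \<oplus>\<^bsub>L\<^esub> b) \<odot>\<^bsub>M\<^esub> x = a \<odot>\<^bsub>M\<^esub> x \<oplus>\<^bsub>M\<^esub> b \<odot>\<^bsub>M\<^esub> x"
  using lm by (simp add: lmodule_def)

lemma smult_r_distr: "a \<in> carrier L \<Longrightarrow> x \<in> carrier M \<Longrightarrow> y \<in> carrier M \<Longrightarrow>
    a \<odot>\<^bsub>M\<^esub> (x \<oplus>\<^bsub>M\<^esub> y) = a \<odot>\<^bsub>M\<^esub> x \<oplus>\<^bsub>M\<^esub> a \<odot>\<^bsub>M\<^esub> y"
  using lm by (simp add: lmodule_def)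

lemma smult_assoc: "a \<in> carrier L \<Longrightarrow> b \<in> carrier L \<Longrightarrow> x \<in> carrier M \<Longrightarrow>
    (a \<otimes>\<^bsub>L\<^esub> b) \<odot>\<^bsub>M\<^esub> x = a \<odot>\<^bsub>M\<^esub> (b \<odot>\<^bsub>M\<^esub> x)"
  using lm by (simp add: lmodule_def)

lemma smult_one[simp]: "x \<in> carrier M \<Longrightarrow> \<one>\<^bsub>L\<^esub> \<odot>\<^bsub>M\<^esub> x = x"
  using lm by (simp add: lmodule_def)

lemma zero_smult[simp]: "x \<in> carrier M \<Longrightarrow> \<zero>\<^bsub>L\<^esub> \<odot>\<^bsub>M\<^esub> x = \<zero>\<^bsub>M\<^esub>"
proof -
  assume x: "x \<in> carrier M"
  have "\<zero>\<^bsub>L\<^esub> \<odot>\<^bsub>M\<^esub> x \<oplus>\<^bsub>M\<^esub> \<zero>\<^bsub>L\<^esub> \<odot>\<^bsub>M\<^esub> x = \<zero>\<^bsub>L\<^esub> \<odot>\<^bsub>M\<^esub> x \<oplus>\<^bsub>M\<^esub> \<zero>\<^bsub>M\<^esub>"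
    using smult_l_distr[of "\<zero>\<^bsub>L\<^esub>" "\<zero>\<^bsub>L\<^esub>" x] x by simp
  then show ?thesis using x by (simp add: M.add.l_cancel)
qed

lemma smult_zero[simp]: "a \<in> carrier L \<Longrightarrow> a \<odot>\<^bsub>M\<^esub> \<zero>\<^bsub>M\<^esub> = \<zero>\<^bsub>M\<^esub>"
proof -
  assume a: "a \<in> carrier L"
  have "a \<odot>\<^bsub>M\<^esub> \<zero>\<^bsub>M\<^esub> \<oplus>\<^bsub>M\<^esub> a \<odot>\<^bsub>M\<^esub> \<zero>\<^bsub>M\<^esub> = a \<odot>\<^bsub>M\<^esub> \<zero>\<^bsub>M\<^esub> \<oplus>\<^bsub>M\<^esub> \<zero>\<^bsub>M\<^esub>"
    using smult_r_distr[of a "\<zero>\<^bsub>M\<^esub>" "\<zero>\<^bsub>M\<^esub>"] a by simp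
  then show ?thesis using a by (simp add: M.add.l_cancel)
qed

lemma neg_smult: "a \<in> carrier L \<Longrightarrow> x \<in> carrier M \<Longrightarrow> (\<ominus>\<^bsub>L\<^esub> a) \<odot>\<^bsub>M\<^esub> x = \<ominus>\<^bsub>M\<^esub> (a \<odot>\<^bsub>M\<^esub> x)"
proof -
  assume a: "a \<in> carrier L" and x: "x \<in> carrier M"
  have "(\<ominus>\<^bsub>L\<^esub> a) \<odot>\<^bsub>M\<^esub> x \<oplus>\<^bsub>M\<^esub> a \<odot>\<^bsub>M\<^esub> x = \<zero>\<^bsub>M\<^esub>"
    using smult_l_distr[of "\<ominus>\<^bsub>L\<^esub> a" a x] a x by (simp add: R.l_neg)
  then show ?thesis using a x by (simp add: M.add.inv_equality)
qed

lemma smult_neg: "a \<in> carrier L \<Longrightarrow> x \<in> carrier M \<Longrightarrow> a \<odot>\<^bsub>M\<^esub> (\<ominus>\<^bsub>M\<^esub> x) = \<ominus>\<^bsub>M\<^esub> (a \<odot>\<^bsub>M\<^esub> x)"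
proof -
  assume a: "a \<in> carrier L" and x: "x \<in> carrier M"
  have "a \<odot>\<^bsub>M\<^esub> (\<ominus>\<^bsub>M\<^esub> x) \<oplus>\<^bsub>M\<^esub> a \<odot>\<^bsub>M\<^esub> x = \<zero>\<^bsub>M\<^esub>"
    using smult_r_distr[of a "\<ominus>\<^bsub>M\<^esub> x" x, symmetric] a x by (simp add: M.l_neg)
  then show ?thesis using a x by (simp add: M.add.inv_equality)
qed

end

lemma lmodI: "lmodule L M \<Longrightarrow> lmod L M"
  by (simp add: lmod_def)

lemma submoduleD:
  assumes "submodule L M N"
  shows "N \<subseteq> carrier M" "\<zero>\<^bsub>M\<^esub> \<in> N" "\<And>x y. x \<in> N \<Longrightarrow> y \<in> N \<Longrightarrow> x \<oplus>\<^bsub>M\<^esub> y \<in> N"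
    "\<And>x. x \<in> N \<Longrightarrow> \<ominus>\<^bsub>M\<^esub> x \<in> N" "\<And>a x. a \<in> carrier L \<Longrightarrow> x \<in> N \<Longrightarrow> a \<odot>\<^bsub>M\<^esub> x \<in> N"
  using assms by (auto simp: submodule_def)

definition cyclic_submod :: "'a ring \<Rightarrow> ('a, 'b) module \<Rightarrow> 'b \<Rightarrow> 'b set" where
  "cyclic_submod L M x = {a \<odot>\<^bsub>M\<^esub> x | a. a \<in> carrier L}"

context lmod
begin

lemma submodule_Inter:
  assumes "\<And>N. N \<in> \<N> \<Longrightarrow> submodule L M N"
  shows "submodule L M (carrier M \<inter> \<Inter>\<N>)"
  using assms unfolding submodule_def by auto

lemma submodule_Int: "submodule L M N1 \<Longrightarrow> submodule L M N2 \<Longrightarrow> submodule L M (N1 \<inter> N2)"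
  unfolding submodule_def by auto

lemma submodule_carrier: "submodule L M (carrier M)"
  by (auto simp: submodule_def)

lemma mod_span_submodule: "Y \<subseteq> carrier M \<Longrightarrow> submodule L M (mod_span L M Y)"
  unfolding mod_span_def submodule_def using submodule_carrier
  by (auto simp: submodule_def)

lemma mod_span_least: "submodule L M N \<Longrightarrow> Y \<subseteq> N \<Longrightarrow> mod_span L M Y \<subseteq> N"
  by (auto simp: mod_span_def)

lemma mod_span_inc: "Y \<subseteq> carrier M \<Longrightarrow> y \<in> Y \<Longrightarrow> y \<in> mod_span L M Y"
  by (auto simp: mod_span_def)

lemma submodule_Union_chain:
  assumes ne: "\<N> \<noteq> {}" and sub: "\<And>N. N \<in> \<N> \<Longrightarrow> submodule L M N"
    and chain: "\<And>N1 N2. N1 \<in> \<N> \<Longrightarrow> N2 \<in> \<N> \<Longrightarrow> N1 \<subseteq> N2 \<or> N2 \<subseteq> N1"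
  shows "submodule L M (\<Union>\<N>)"
  unfolding submodule_def
proof (intro conjI ballI)
  show "\<Union>\<N> \<subseteq> carrier M" using sub by (blast dest: submoduleD(1))
  show "\<zero>\<^bsub>M\<^esub> \<in> \<Union>\<N>" using ne sub by (blast dest: submoduleD(2))
next
  fix x y assume "x \<in> \<Union>\<N>" "y \<in> \<Union>\<N>"
  then obtain N1 N2 where "N1 \<in> \<N>" "N2 \<in> \<N>" "x \<in> N1" "y \<in> N2" by blast
  with chain[of N1 N2] sub show "x \<oplus>\<^bsub>M\<^esub> y \<in> \<Union>\<N>" by (blast dest: submoduleD(3))
next
  fix x assume "x \<in> \<Union>\<N>"
  then show "\<ominus>\<^bsub>M\<^esub> x \<in> \<Union>\<N>" using sub by (blast dest: submoduleD(4))
next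
  fix a x assume "a \<in> carrier L" "x \<in> \<Union>\<N>"
  then show "a \<odot>\<^bsub>M\<^esub> x \<in> \<Union>\<N>" using sub by (blast dest: submoduleD(5))
qed

lemma set_sum_submodule:
  assumes N1: "submodule L M N1" and N2: "submodule L M N2"
  shows "submodule L M (set_sum M N1 N2)"
proof -
  have C1: "N1 \<subseteq> carrier M" and C2: "N2 \<subseteq> carrier M" using N1 N2 by (simp_all add: submoduleD)
  show ?thesis unfolding submodule_def set_sum_def
  proof (intro conjI ballI)
    show "{x \<oplus>\<^bsub>M\<^esub> y |x y. x \<in> N1 \<and> y \<in> N2} \<subseteq> carrier M" using C1 C2 by auto
    have "\<zero>\<^bsub>M\<^esub> = \<zero>\<^bsub>M\<^esub> \<oplus>\<^bsub>M\<^esub> \<zero>\<^bsub>M\<^esub>" by simp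
    with N1 N2 show "\<zero>\<^bsub>M\<^esub> \<in> {x \<oplus>\<^bsub>M\<^esub> y |x y. x \<in> N1 \<and> y \<in> N2}" by (blast dest: submoduleD(2))
  next
    fix u v assume "u \<in> {x \<oplus>\<^bsub>M\<^esub> y |x y. x \<in> N1 \<and> y \<in> N2}" "v \<in> {x \<oplus>\<^bsub>M\<^esub> y |x y. x \<in> N1 \<and> y \<in> N2}"
    then obtain x1 y1 x2 y2 where h: "x1 \<in> N1" "y1 \<in> N2" "x2 \<in> N1" "y2 \<in> N2"
      "u = x1 \<oplus>\<^bsub>M\<^esub> y1" "v = x2 \<oplus>\<^bsub>M\<^esub> y2" by blast
    have "u \<oplus>\<^bsub>M\<^esub> v = (x1 \<oplus>\<^bsub>M\<^esub> x2) \<oplus>\<^bsub>M\<^esub> (y1 \<oplus>\<^bsub>M\<^esub> y2)"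
      using h C1 C2 by (simp add: subsetD M.a_ac)
    moreover have "x1 \<oplus>\<^bsub>M\<^esub> x2 \<in> N1" "y1 \<oplus>\<^bsub>M\<^esub> y2 \<in> N2" using h N1 N2 by (simp_all add: submoduleD)
    ultimately show "u \<oplus>\<^bsub>M\<^esub> v \<in> {x \<oplus>\<^bsub>M\<^esub> y |x y. x \<in> N1 \<and> y \<in> N2}" by blast
  next
    fix u assume "u \<in> {x \<oplus>\<^bsub>M\<^esub> y |x y. x \<in> N1 \<and> y \<in> N2}"
    then obtain x1 y1 where h: "x1 \<in> N1" "y1 \<in> N2" "u = x1 \<oplus>\<^bsub>M\<^esub> y1" by blast
    have "\<ominus>\<^bsub>M\<^esub> u = (\<ominus>\<^bsub>M\<^esub> x1) \<oplus>\<^bsub>M\<^esub> (\<ominus>\<^bsub>M\<^esub> y1)"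
      using h C1 C2 by (simp add: subsetD M.minus_add M.a_comm)
    moreover have "\<ominus>\<^bsub>M\<^esub> x1 \<in> N1" "\<ominus>\<^bsub>M\<^esub> y1 \<in> N2" using h N1 N2 by (simp_all add: submoduleD)
    ultimately show "\<ominus>\<^bsub>M\<^esub> u \<in> {x \<oplus>\<^bsub>M\<^esub> y |x y. x \<in> N1 \<and> y \<in> N2}" by blast
  next
    fix a u assume a: "a \<in> carrier L" and "u \<in> {x \<oplus>\<^bsub>M\<^esub> y |x y. x \<in> N1 \<and> y \<in> N2}"
    then obtain x1 y1 where h: "x1 \<in> N1" "y1 \<in> N2" "u = x1 \<oplus>\<^bsub>M\<^esub> y1" by blast
    have "a \<odot>\<^bsub>M\<^esub> u = (a \<odot>\<^bsub>M\<^esub> x1) \<oplus>\<^bsub>M\<^esub> (a \<odot>\<^bsub>M\<^esub> y1)"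
      using h C1 C2 a by (simp add: subsetD smult_r_distr)
    moreover have "a \<odot>\<^bsub>M\<^esub> x1 \<in> N1" "a \<odot>\<^bsub>M\<^esub> y1 \<in> N2" using h N1 N2 a by (simp_all add: submoduleD)
    ultimately show "a \<odot>\<^bsub>M\<^esub> u \<in> {x \<oplus>\<^bsub>M\<^esub> y |x y. x \<in> N1 \<and> y \<in> N2}" by blast
  qed
qed

lemma set_sum_upper1: "submodule L M N1 \<Longrightarrow> submodule L M N2 \<Longrightarrow> N1 \<subseteq> set_sum M N1 N2"
  unfolding set_sum_def by (force dest: submoduleD(1,2))

lemma set_sum_upper2: "submodule L M N1 \<Longrightarrow> submodule L M N2 \<Longrightarrow> N2 \<subseteq> set_sum M N1 N2"
  unfolding set_sum_def by (force dest: submoduleD(1,2))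

lemma set_sum_commute:
  assumes "N1 \<subseteq> carrier M" "N2 \<subseteq> carrier M"
  shows "set_sum M N1 N2 = set_sum M N2 N1"
proof -
  have c: "\<And>x y. x \<in> N1 \<Longrightarrow> y \<in> N2 \<Longrightarrow> x \<oplus>\<^bsub>M\<^esub> y = y \<oplus>\<^bsub>M\<^esub> x"
    using assms by (meson M.a_comm subsetD)
  show ?thesis unfolding set_sum_def
  proof (intro equalityI subsetI)
    fix z assume "z \<in> {x \<oplus>\<^bsub>M\<^esub> y |x y. x \<in> N1 \<and> y \<in> N2}"
    then obtain x y where h: "x \<in> N1" "y \<in> N2" "z = x \<oplus>\<^bsub>M\<^esub> y" by blast
    then have "z = y \<oplus>\<^bsub>M\<^esub> x" using c by simp
    then show "z \<in> {x \<oplus>\<^bsub>M\<^esub> y |x y. x \<in> N2 \<and> y \<in> N1}" using h by blast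
  next
    fix z assume "z \<in> {x \<oplus>\<^bsub>M\<^esub> y |x y. x \<in> N2 \<and> y \<in> N1}"
    then obtain x y where h: "x \<in> N2" "y \<in> N1" "z = x \<oplus>\<^bsub>M\<^esub> y" by blast
    then have "z = y \<oplus>\<^bsub>M\<^esub> x" using c by simp
    then show "z \<in> {x \<oplus>\<^bsub>M\<^esub> y |x y. x \<in> N1 \<and> y \<in> N2}" using h by blast
  qed
qed

lemma lmodule_restrict:
  assumes N: "submodule L M N"
  shows "lmodule L (M\<lparr>carrier := N\<rparr>)"
proof -
  have NM: "N \<subseteq> carrier M" using N by (simp add: submoduleD)
  then have NMx: "\<And>x. x \<in> N \<Longrightarrow> x \<in> carrier M" by blast
  have "abelian_group (M\<lparr>carrier := N\<rparr>)"
  proof (rule abelian_groupI, simp_all)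
    show "\<And>x y. x \<in> N \<Longrightarrow> y \<in> N \<Longrightarrow> x \<oplus>\<^bsub>M\<^esub> y \<in> N" "\<zero>\<^bsub>M\<^esub> \<in> N"
      using N by (simp_all add: submoduleD)
    show "\<And>x y z. x \<in> N \<Longrightarrow> y \<in> N \<Longrightarrow> z \<in> N \<Longrightarrow> x \<oplus>\<^bsub>M\<^esub> y \<oplus>\<^bsub>M\<^esub> z = x \<oplus>\<^bsub>M\<^esub> (y \<oplus>\<^bsub>M\<^esub> z)"
      by (simp add: NMx M.a_assoc)
    show "\<And>x y. x \<in> N \<Longrightarrow> y \<in> N \<Longrightarrow> x \<oplus>\<^bsub>M\<^esub> y = y \<oplus>\<^bsub>M\<^esub> x"
      by (simp add: NMx M.a_comm)
    show "\<And>x. x \<in> N \<Longrightarrow> \<zero>\<^bsub>M\<^esub> \<oplus>\<^bsub>M\<^esub> x = x"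
      by (simp add: NMx)
    show "\<And>x. x \<in> N \<Longrightarrow> \<exists>y\<in>N. y \<oplus>\<^bsub>M\<^esub> x = \<zero>\<^bsub>M\<^esub>"
      using N NMx M.l_neg by (blast dest: submoduleD(4))
  qed
  then show ?thesis using N R.ring_axioms unfolding lmodule_def
    by (simp add: submoduleD NMx smult_l_distr smult_r_distr smult_assoc)
qed

lemma submodule_restrict_iff:
  assumes N: "submodule L M N" and N': "N' \<subseteq> N"
  shows "submodule L (M\<lparr>carrier := N\<rparr>) N' \<longleftrightarrow> submodule L M N'"
proof -
  have "N \<subseteq> carrier M" using N by (simp add: submoduleD)
  moreover have "\<forall>x\<in>N'. a_inv (M\<lparr>carrier := N\<rparr>) x = \<ominus>\<^bsub>M\<^esub> x"
    using a_inv_restrict_carrier[OF M.abelian_group_axioms] N N' calculation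
    by (blast dest: submoduleD(4))
  ultimately show ?thesis using N' unfolding submodule_def by auto
qed

lemma ideal_smult_submodule:
  assumes J: "left_ideal L J" and x: "x \<in> carrier M"
  shows "submodule L M {a \<odot>\<^bsub>M\<^esub> x | a. a \<in> J}" (is "submodule L M ?N")
proof -
  have JL: "J \<subseteq> carrier L" using J by (simp add: left_ideal_iff)
  show ?thesis unfolding submodule_def
  proof (intro conjI ballI)
    show "?N \<subseteq> carrier M" using JL x by auto
    have "\<zero>\<^bsub>L\<^esub> \<in> J" using J by (simp add: left_ideal_iff)
    moreover have "\<zero>\<^bsub>M\<^esub> = \<zero>\<^bsub>L\<^esub> \<odot>\<^bsub>M\<^esub> x" using x by simp
    ultimately show "\<zero>\<^bsub>M\<^esub> \<in> ?N" by blast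
  next
    fix u v assume "u \<in> ?N" "v \<in> ?N"
    then obtain a b where ab: "a \<in> J" "b \<in> J" "u = a \<odot>\<^bsub>M\<^esub> x" "v = b \<odot>\<^bsub>M\<^esub> x" by auto
    have "a \<oplus>\<^bsub>L\<^esub> b \<in> J" using J ab by (simp add: left_ideal_iff)
    moreover have "u \<oplus>\<^bsub>M\<^esub> v = (a \<oplus>\<^bsub>L\<^esub> b) \<odot>\<^bsub>M\<^esub> x"
      using ab JL x by (simp add: smult_l_distr subsetD)
    ultimately show "u \<oplus>\<^bsub>M\<^esub> v \<in> ?N" by blast
  next
    fix u assume "u \<in> ?N"
    then obtain a where a: "a \<in> J" "u = a \<odot>\<^bsub>M\<^esub> x" by auto
    have "\<ominus>\<^bsub>L\<^esub> a \<in> J" using J a by (simp add: left_ideal_iff)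
    moreover have "\<ominus>\<^bsub>M\<^esub> u = (\<ominus>\<^bsub>L\<^esub> a) \<odot>\<^bsub>M\<^esub> x"
      using a JL x by (simp add: neg_smult subsetD)
    ultimately show "\<ominus>\<^bsub>M\<^esub> u \<in> ?N" by blast
  next
    fix c u assume c: "c \<in> carrier L" and "u \<in> ?N"
    then obtain a where a: "a \<in> J" "u = a \<odot>\<^bsub>M\<^esub> x" by auto
    have "c \<otimes>\<^bsub>L\<^esub> a \<in> J" using J a c by (simp add: left_ideal_iff)
    moreover have "c \<odot>\<^bsub>M\<^esub> u = (c \<otimes>\<^bsub>L\<^esub> a) \<odot>\<^bsub>M\<^esub> x"
      using a JL x c by (simp add: smult_assoc subsetD)
    ultimately show "c \<odot>\<^bsub>M\<^esub> u \<in> ?N" by blast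
  qed
qed

lemma cyclic_submod_submodule: "x \<in> carrier M \<Longrightarrow> submodule L M (cyclic_submod L M x)"
  unfolding cyclic_submod_def
  by (rule ideal_smult_submodule) (simp add: left_ideal_iff)

lemma cyclic_submod_self: "x \<in> carrier M \<Longrightarrow> x \<in> cyclic_submod L M x"
  unfolding cyclic_submod_def using smult_one[of x, symmetric] R.one_closed by blast

lemma cyclic_submod_smult: "a \<in> carrier L \<Longrightarrow> a \<odot>\<^bsub>M\<^esub> x \<in> cyclic_submod L M x"
  unfolding cyclic_submod_def by blast

lemma finsum_smult_mem:
  assumes F: "finite F" and e: "e \<in> F \<rightarrow> carrier L" and N: "submodule L M N" and x: "x \<in> carrier M"
    and h: "\<And>m. m \<in> F \<Longrightarrow> e m \<odot>\<^bsub>M\<^esub> x \<in> N"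
  shows "finsum L e F \<odot>\<^bsub>M\<^esub> x \<in> N"
  using F e h
proof (induct F)
  case empty
  then show ?case using x N by (simp add: submoduleD)
next
  case (insert a F)
  then have "finsum L e (insert a F) \<odot>\<^bsub>M\<^esub> x = e a \<odot>\<^bsub>M\<^esub> x \<oplus>\<^bsub>M\<^esub> finsum L e F \<odot>\<^bsub>M\<^esub> x"
    using x by (simp add: R.finsum_insert smult_l_distr R.finsum_closed)
  with insert N show ?case by (simp add: submoduleD)
qed

lemma submodule_mem_split_one:
  assumes F: "finite F" and e: "e \<in> F \<rightarrow> carrier L" and N: "submodule L M N" and x: "x \<in> carrier M"
    and h: "\<And>m. m \<in> F \<Longrightarrow> e m \<odot>\<^bsub>M\<^esub> x \<in> N"
    and h1: "(\<one>\<^bsub>L\<^esub> \<ominus>\<^bsub>L\<^esub> finsum L e F) \<odot>\<^bsub>M\<^esub> x \<in> N"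
  shows "x \<in> N"
proof -
  have Ec: "finsum L e F \<in> carrier L" using e by (simp add: R.finsum_closed)
  have "(\<one>\<^bsub>L\<^esub> \<ominus>\<^bsub>L\<^esub> finsum L e F) \<oplus>\<^bsub>L\<^esub> finsum L e F = \<one>\<^bsub>L\<^esub>"
    using Ec by (simp add: R.minus_eq R.a_assoc R.l_neg)
  then have "x = (\<one>\<^bsub>L\<^esub> \<ominus>\<^bsub>L\<^esub> finsum L e F) \<odot>\<^bsub>M\<^esub> x \<oplus>\<^bsub>M\<^esub> finsum L e F \<odot>\<^bsub>M\<^esub> x"
    using smult_l_distr[of "\<one>\<^bsub>L\<^esub> \<ominus>\<^bsub>L\<^esub> finsum L e F" "finsum L e F" x] Ec x by simp
  also have "\<dots> \<in> N" using finsum_smult_mem[OF F e N x h] h1 N by (simp add: submoduleD)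
  finally show ?thesis .
qed

end

lemma mod_hom_zero:
  assumes "lmodule L M" "lmodule L N" "mod_hom L M N f"
  shows "f \<zero>\<^bsub>M\<^esub> = \<zero>\<^bsub>N\<^esub>"
proof -
  interpret M: lmod L M using assms(1) by (rule lmodI)
  interpret N: lmod L N using assms(2) by (rule lmodI)
  have f: "f \<in> carrier M \<rightarrow> carrier N"
    and f_smult: "\<And>a x. a \<in> carrier L \<Longrightarrow> x \<in> carrier M \<Longrightarrow> f (a \<odot>\<^bsub>M\<^esub> x) = a \<odot>\<^bsub>N\<^esub> f x"
    using assms(3) by (auto simp: mod_hom_def)
  have "f \<zero>\<^bsub>M\<^esub> = f (\<zero>\<^bsub>L\<^esub> \<odot>\<^bsub>M\<^esub> \<zero>\<^bsub>M\<^esub>)" by simp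
  also have "\<dots> = \<zero>\<^bsub>L\<^esub> \<odot>\<^bsub>N\<^esub> f \<zero>\<^bsub>M\<^esub>"
    using f_smult[of "\<zero>\<^bsub>L\<^esub>" "\<zero>\<^bsub>M\<^esub>"] by simp
  also have "\<dots> = \<zero>\<^bsub>N\<^esub>" using f by (simp add: funcset_mem)
  finally show ?thesis .
qed

section \<open>Maximal left ideals and simple modules\<close>

lemma lmodule_reg_mod: "ring L \<Longrightarrow> lmodule L (reg_mod L)"
proof -
  assume r: "ring L"
  then interpret R: ring L .
  have "abelian_group (reg_mod L)"
    by (rule abelian_groupI) (auto simp: R.a_ac intro: R.l_neg)
  then show ?thesis using r
    by (simp add: lmodule_def R.l_distr R.r_distr R.m_assoc)
qed

lemma left_ideal_one_eq:
  assumes "ring L" "left_ideal L I" "\<one>\<^bsub>L\<^esub> \<in> I"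
  shows "I = carrier L"
proof -
  interpret ring L by fact
  show ?thesis using assms(2,3) unfolding left_ideal_iff by (metis r_one subsetI subset_antisym)
qed

lemma maximal_left_ideal_subset: "maximal_left_ideal L m \<Longrightarrow> m \<subseteq> carrier L"
  by (simp add: maximal_left_ideal_def left_ideal_iff)

lemma jac_rad_subset: "jac_rad L \<subseteq> carrier L"
  by (simp add: jac_rad_def)

lemma jac_radD: "x \<in> jac_rad L \<Longrightarrow> maximal_left_ideal L m \<Longrightarrow> x \<in> m"
  by (simp add: jac_rad_def)

lemma jac_radI: "x \<in> carrier L \<Longrightarrow> (\<And>m. maximal_left_ideal L m \<Longrightarrow> x \<in> m) \<Longrightarrow> x \<in> jac_rad L"
  by (simp add: jac_rad_def)

lemma jac_rad_lmult:
  assumes "ring L" "a \<in> carrier L" "x \<in> jac_rad L"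
  shows "a \<otimes>\<^bsub>L\<^esub> x \<in> jac_rad L"
proof (rule jac_radI)
  interpret ring L by fact
  show "a \<otimes>\<^bsub>L\<^esub> x \<in> carrier L" using assms(2,3) jac_rad_subset[of L] by blast
  fix m assume "maximal_left_ideal L m"
  then show "a \<otimes>\<^bsub>L\<^esub> x \<in> m"
    using assms(2,3) by (simp add: jac_radD maximal_left_ideal_def left_ideal_iff)
qed

lemma maximal_left_ideal_comaximal:
  assumes r: "ring L" and m: "maximal_left_ideal L m" and a: "a \<in> carrier L" "a \<notin> m"
  shows "\<exists>p\<in>m. \<exists>\<mu>\<in>carrier L. \<one>\<^bsub>L\<^esub> = p \<oplus>\<^bsub>L\<^esub> \<mu> \<otimes>\<^bsub>L\<^esub> a"
proof -
  interpret RM: lmod L "reg_mod L" using lmodule_reg_mod[OF r] by (rule lmodI)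
  let ?Q = "set_sum (reg_mod L) m (cyclic_submod L (reg_mod L) a)"
  have msub: "submodule L (reg_mod L) m" and La: "submodule L (reg_mod L) (cyclic_submod L (reg_mod L) a)"
    using m a RM.cyclic_submod_submodule by (auto simp: maximal_left_ideal_def left_ideal_def)
  then have "left_ideal L ?Q" unfolding left_ideal_def by (rule RM.set_sum_submodule)
  moreover have "m \<subseteq> ?Q" using RM.set_sum_upper1[OF msub La] .
  moreover have "a \<in> ?Q" using RM.set_sum_upper2[OF msub La] RM.cyclic_submod_self a by auto
  ultimately have "?Q = carrier L" using m a(2) unfolding maximal_left_ideal_def by blast
  then have "\<one>\<^bsub>L\<^esub> \<in> ?Q" using RM.R.one_closed by simp
  then obtain p y where "p \<in> m" "y \<in> cyclic_submod L (reg_mod L) a" "\<one>\<^bsub>L\<^esub> = p \<oplus>\<^bsub>L\<^esub> y"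
    unfolding set_sum_def by auto
  moreover obtain \<mu> where "\<mu> \<in> carrier L" "y = \<mu> \<otimes>\<^bsub>L\<^esub> a"
    using \<open>y \<in> cyclic_submod L (reg_mod L) a\<close> unfolding cyclic_submod_def by auto
  ultimately show ?thesis by blast
qed

context lmod
begin

lemma annihilator_left_ideal: "x \<in> carrier M \<Longrightarrow> left_ideal L {a\<in>carrier L. a \<odot>\<^bsub>M\<^esub> x = \<zero>\<^bsub>M\<^esub>}"
  by (auto simp: left_ideal_iff smult_l_distr neg_smult smult_assoc)

lemma simple_mod_annihilator_maximal:
  assumes S: "simple_mod L M" and x: "x \<in> carrier M" "x \<noteq> \<zero>\<^bsub>M\<^esub>"
  shows "maximal_left_ideal L {a\<in>carrier L. a \<odot>\<^bsub>M\<^esub> x = \<zero>\<^bsub>M\<^esub>}" (is "maximal_left_ideal L ?I")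
  unfolding maximal_left_ideal_def
proof (intro conjI allI impI)
  show "left_ideal L ?I" using annihilator_left_ideal x(1) .
  show "?I \<noteq> carrier L"
  proof
    assume I: "?I = carrier L"
    have "\<one>\<^bsub>L\<^esub> \<in> ?I" using R.one_closed by (simp only: I)
    then show False using x by simp
  qed
  fix J assume J: "left_ideal L J \<and> ?I \<subseteq> J"
  let ?N = "{a \<odot>\<^bsub>M\<^esub> x | a. a \<in> J}"
  have JL: "J \<subseteq> carrier L" using J by (simp add: left_ideal_iff)
  have "submodule L M ?N" using ideal_smult_submodule J x(1) by blast
  then have "?N = {\<zero>\<^bsub>M\<^esub>} \<or> ?N = carrier M" using S by (simp add: simple_mod_def)
  then show "J = ?I \<or> J = carrier L"
  proof
    assume N0: "?N = {\<zero>\<^bsub>M\<^esub>}"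
    have "J \<subseteq> ?I"
    proof
      fix a assume a: "a \<in> J"
      then have "a \<odot>\<^bsub>M\<^esub> x \<in> ?N" by blast
      then show "a \<in> ?I" using N0 JL a by blast
    qed
    then show ?thesis using J by blast
  next
    assume "?N = carrier M"
    then have "x \<in> ?N" using x by simp
    then obtain j where j: "j \<in> J" "x = j \<odot>\<^bsub>M\<^esub> x" by blast
    note j = j(1) j(2)[symmetric]
    have jL: "j \<in> carrier L" using j JL by auto
    have "(\<one>\<^bsub>L\<^esub> \<ominus>\<^bsub>L\<^esub> j) \<odot>\<^bsub>M\<^esub> x = x \<ominus>\<^bsub>M\<^esub> j \<odot>\<^bsub>M\<^esub> x"
      using jL x by (simp add: R.minus_eq M.minus_eq smult_l_distr neg_smult)
    also have "\<dots> = \<zero>\<^bsub>M\<^esub>" using j(2) x by (simp add: M.minus_eq M.r_neg)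
    finally have "(\<one>\<^bsub>L\<^esub> \<ominus>\<^bsub>L\<^esub> j) \<odot>\<^bsub>M\<^esub> x = \<zero>\<^bsub>M\<^esub>" .
    then have "\<one>\<^bsub>L\<^esub> \<ominus>\<^bsub>L\<^esub> j \<in> ?I" using jL by simp
    then have "\<one>\<^bsub>L\<^esub> \<ominus>\<^bsub>L\<^esub> j \<in> J" using J by blast
    then have "(\<one>\<^bsub>L\<^esub> \<ominus>\<^bsub>L\<^esub> j) \<oplus>\<^bsub>L\<^esub> j \<in> J" using J j by (simp add: left_ideal_iff)
    moreover have "(\<one>\<^bsub>L\<^esub> \<ominus>\<^bsub>L\<^esub> j) \<oplus>\<^bsub>L\<^esub> j = \<one>\<^bsub>L\<^esub>" using jL
      by (simp add: R.minus_eq R.a_assoc R.l_neg)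
    ultimately show ?thesis using left_ideal_one_eq[OF R.ring_axioms] J by auto
  qed
qed

lemma simple_mod_jac_rad_smult:
  assumes S: "simple_mod L M" and r: "r \<in> jac_rad L" and x: "x \<in> carrier M"
  shows "r \<odot>\<^bsub>M\<^esub> x = \<zero>\<^bsub>M\<^esub>"
proof (cases "x = \<zero>\<^bsub>M\<^esub>")
  case True
  have "r \<in> carrier L" using r jac_rad_subset[of L] by blast
  then show ?thesis using True by simp
next
  case False
  then show ?thesis using simple_mod_annihilator_maximal[OF S x] r by (auto dest: jac_radD)
qed

lemma cyclic_submod_simple:
  assumes m: "maximal_left_ideal L m" and w: "w \<in> carrier M" "w \<noteq> \<zero>\<^bsub>M\<^esub>"
    and kill: "\<And>a. a \<in> m \<Longrightarrow> a \<odot>\<^bsub>M\<^esub> w = \<zero>\<^bsub>M\<^esub>"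
  shows "simple_submodule L M (cyclic_submod L M w)"
  unfolding simple_submodule_def
proof (intro conjI allI impI)
  show "submodule L M (cyclic_submod L M w)" using cyclic_submod_submodule w(1) .
  show "cyclic_submod L M w \<noteq> {\<zero>\<^bsub>M\<^esub>}" using cyclic_submod_self w by blast
  fix N' assume N': "submodule L M N' \<and> N' \<subseteq> cyclic_submod L M w"
  let ?P = "{a\<in>carrier L. a \<odot>\<^bsub>M\<^esub> w \<in> N'}"
  have mL: "m \<subseteq> carrier L" using maximal_left_ideal_subset[OF m] .
  have N's: "submodule L M N'" using N' by blast
  have "left_ideal L ?P" unfolding left_ideal_iff
  proof (intro conjI ballI)
    show "?P \<subseteq> carrier L" by auto
    show "\<zero>\<^bsub>L\<^esub> \<in> ?P" using w N's by (simp add: submoduleD)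
  next
    fix a b assume "a \<in> ?P" "b \<in> ?P"
    then show "a \<oplus>\<^bsub>L\<^esub> b \<in> ?P" using w N's by (simp add: smult_l_distr submoduleD)
  next
    fix a assume "a \<in> ?P"
    then show "\<ominus>\<^bsub>L\<^esub> a \<in> ?P" using w N's by (simp add: neg_smult submoduleD)
  next
    fix c a assume "c \<in> carrier L" "a \<in> ?P"
    then show "c \<otimes>\<^bsub>L\<^esub> a \<in> ?P" using w N's by (simp add: smult_assoc submoduleD)
  qed
  moreover have "m \<subseteq> ?P" using kill mL submoduleD(2)[OF N's] by auto
  ultimately have "?P = m \<or> ?P = carrier L" using m unfolding maximal_left_ideal_def by blast
  then show "N' = {\<zero>\<^bsub>M\<^esub>} \<or> N' = cyclic_submod L M w"
  proof
    assume Pm: "?P = m"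
    have "N' \<subseteq> {\<zero>\<^bsub>M\<^esub>}"
    proof
      fix u assume u: "u \<in> N'"
      then obtain a where a: "a \<in> carrier L" "u = a \<odot>\<^bsub>M\<^esub> w" using N' by (auto simp: cyclic_submod_def)
      then have "a \<in> m" using u Pm by blast
      then show "u \<in> {\<zero>\<^bsub>M\<^esub>}" using a kill by simp
    qed
    then show ?thesis using submoduleD(2)[OF N's] by blast
  next
    assume "?P = carrier L"
    then have "\<one>\<^bsub>L\<^esub> \<odot>\<^bsub>M\<^esub> w \<in> N'" using R.one_closed by blast
    then have "w \<in> N'" using w by simp
    then have "cyclic_submod L M w \<subseteq> N'" using N's by (auto simp: cyclic_submod_def submoduleD)
    then show ?thesis using N' by blast
  qed
qed

lemma simple_submodule_simple_mod:
  assumes N: "simple_submodule L M N"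
  shows "simple_mod L (M\<lparr>carrier := N\<rparr>)"
  unfolding simple_mod_def
proof (intro conjI allI impI)
  have Ns: "submodule L M N" using N by (simp add: simple_submodule_def)
  then show "lmodule L (M\<lparr>carrier := N\<rparr>)" by (rule lmodule_restrict)
  show "carrier (M\<lparr>carrier := N\<rparr>) \<noteq> {\<zero>\<^bsub>M\<lparr>carrier := N\<rparr>\<^esub>}" using N by (simp add: simple_submodule_def)
  fix N' assume N': "submodule L (M\<lparr>carrier := N\<rparr>) N'"
  then have "N' \<subseteq> N" by (simp add: submodule_def)
  then show "N' = {\<zero>\<^bsub>M\<lparr>carrier := N\<rparr>\<^esub>} \<or> N' = carrier (M\<lparr>carrier := N\<rparr>)"
    using N N' submodule_restrict_iff[OF Ns] by (simp add: simple_submodule_def)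
qed

end

section \<open>Artin algebras are left artinian\<close>

locale central_artinian_subring =
  fixes L :: "'a ring" and Z :: "'a set"
  assumes ring_L: "ring L" and subring_Z: "subring Z L"
    and central: "\<And>z x. z \<in> Z \<Longrightarrow> x \<in> carrier L \<Longrightarrow> z \<otimes>\<^bsub>L\<^esub> x = x \<otimes>\<^bsub>L\<^esub> z"
    and artinian: "artinian_cring (L\<lparr>carrier := Z\<rparr>)"
begin

sublocale R: ring L by (rule ring_L)

lemma Z_subset: "Z \<subseteq> carrier L" using subringE(1)[OF subring_Z] .
lemma Z_zero: "\<zero>\<^bsub>L\<^esub> \<in> Z" using subringE(2)[OF subring_Z] .
lemma Z_one: "\<one>\<^bsub>L\<^esub> \<in> Z" using subringE(3)[OF subring_Z] .
lemma Z_neg: "h \<in> Z \<Longrightarrow> \<ominus>\<^bsub>L\<^esub> h \<in> Z" using subringE(5)[OF subring_Z] .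
lemma Z_mult: "h1 \<in> Z \<Longrightarrow> h2 \<in> Z \<Longrightarrow> h1 \<otimes>\<^bsub>L\<^esub> h2 \<in> Z" using subringE(6)[OF subring_Z] .
lemma Z_add: "h1 \<in> Z \<Longrightarrow> h2 \<in> Z \<Longrightarrow> h1 \<oplus>\<^bsub>L\<^esub> h2 \<in> Z" using subringE(7)[OF subring_Z] .

definition Z_submodule :: "'a set \<Rightarrow> bool" where
  "Z_submodule N \<longleftrightarrow> N \<subseteq> carrier L \<and> \<zero>\<^bsub>L\<^esub> \<in> N \<and> (\<forall>x\<in>N. \<forall>y\<in>N. x \<oplus>\<^bsub>L\<^esub> y \<in> N) \<and>
     (\<forall>z\<in>Z. \<forall>x\<in>N. z \<otimes>\<^bsub>L\<^esub> x \<in> N)"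

definition Z_span :: "'a set \<Rightarrow> 'a set" where
  "Z_span G = {finsum L (\<lambda>g. c g \<otimes>\<^bsub>L\<^esub> g) G | c. c \<in> G \<rightarrow> Z}"

lemma Z_spanI: "c \<in> G \<rightarrow> Z \<Longrightarrow> y = finsum L (\<lambda>g. c g \<otimes>\<^bsub>L\<^esub> g) G \<Longrightarrow> y \<in> Z_span G"
  unfolding Z_span_def by blast

lemma Z_submodule_neg: "Z_submodule N \<Longrightarrow> x \<in> N \<Longrightarrow> \<ominus>\<^bsub>L\<^esub> x \<in> N"
proof -
  assume N: "Z_submodule N" and x: "x \<in> N"
  have "(\<ominus>\<^bsub>L\<^esub> \<one>\<^bsub>L\<^esub>) \<otimes>\<^bsub>L\<^esub> x \<in> N" using N x Z_neg[OF Z_one] by (simp add: Z_submodule_def)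
  moreover have "x \<in> carrier L" using N x by (auto simp: Z_submodule_def)
  ultimately show ?thesis by (simp add: R.l_minus)
qed

lemma Z_submodule_minus: "Z_submodule N \<Longrightarrow> x \<in> N \<Longrightarrow> y \<in> N \<Longrightarrow> x \<ominus>\<^bsub>L\<^esub> y \<in> N"
  using Z_submodule_neg by (simp add: R.minus_eq Z_submodule_def)

lemma Z_submodule_Z_span:
  assumes G: "finite G" "G \<subseteq> carrier L"
  shows "Z_submodule (Z_span G)"
  unfolding Z_submodule_def
proof (intro conjI ballI)
  have terms: "(\<lambda>g. c g \<otimes>\<^bsub>L\<^esub> g) \<in> G \<rightarrow> carrier L" if "c \<in> G \<rightarrow> Z" for c
    using that G Z_subset by (auto intro!: R.m_closed)
  show "Z_span G \<subseteq> carrier L"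
    using terms by (auto simp: Z_span_def R.finsum_closed)
  have "finsum L (\<lambda>g. (\<lambda>_. \<zero>\<^bsub>L\<^esub>) g \<otimes>\<^bsub>L\<^esub> g) G = finsum L (\<lambda>g. \<zero>\<^bsub>L\<^esub>) G"
    using G by (intro R.finsum_cong') auto
  also have "\<dots> = \<zero>\<^bsub>L\<^esub>" by (rule R.finsum_zero)
  finally have "\<zero>\<^bsub>L\<^esub> = finsum L (\<lambda>g. (\<lambda>_. \<zero>\<^bsub>L\<^esub>) g \<otimes>\<^bsub>L\<^esub> g) G" by simp
  moreover have "(\<lambda>_. \<zero>\<^bsub>L\<^esub>) \<in> G \<rightarrow> Z" using Z_zero by simp
  ultimately show "\<zero>\<^bsub>L\<^esub> \<in> Z_span G" by (rule Z_spanI[rotated])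
next
  fix x y assume "x \<in> Z_span G" "y \<in> Z_span G"
  then obtain c d where c: "c \<in> G \<rightarrow> Z" "x = finsum L (\<lambda>g. c g \<otimes>\<^bsub>L\<^esub> g) G"
    and d: "d \<in> G \<rightarrow> Z" "y = finsum L (\<lambda>g. d g \<otimes>\<^bsub>L\<^esub> g) G" by (auto simp: Z_span_def)
  have f1: "(\<lambda>g. c g \<otimes>\<^bsub>L\<^esub> g) \<in> G \<rightarrow> carrier L" using c(1) G Z_subset by (auto intro!: R.m_closed)
  have f2: "(\<lambda>g. d g \<otimes>\<^bsub>L\<^esub> g) \<in> G \<rightarrow> carrier L" using d(1) G Z_subset by (auto intro!: R.m_closed)
  have "x \<oplus>\<^bsub>L\<^esub> y = finsum L (\<lambda>g. c g \<otimes>\<^bsub>L\<^esub> g \<oplus>\<^bsub>L\<^esub> d g \<otimes>\<^bsub>L\<^esub> g) G"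
    using c d f1 f2 by (simp add: R.finsum_addf)
  also have "\<dots> = finsum L (\<lambda>g. (\<lambda>g. c g \<oplus>\<^bsub>L\<^esub> d g) g \<otimes>\<^bsub>L\<^esub> g) G"
    using c(1) d(1) G Z_subset
    by (intro R.finsum_cong') (auto simp: R.l_distr Pi_def subset_iff intro!: R.m_closed R.a_closed)
  finally have "x \<oplus>\<^bsub>L\<^esub> y = finsum L (\<lambda>g. (\<lambda>g. c g \<oplus>\<^bsub>L\<^esub> d g) g \<otimes>\<^bsub>L\<^esub> g) G" .
  moreover have "(\<lambda>g. c g \<oplus>\<^bsub>L\<^esub> d g) \<in> G \<rightarrow> Z" using c(1) d(1) by (auto intro: Z_add)
  ultimately show "x \<oplus>\<^bsub>L\<^esub> y \<in> Z_span G" by (rule Z_spanI[rotated])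
next
  fix z x assume z: "z \<in> Z" and "x \<in> Z_span G"
  then obtain c where c: "c \<in> G \<rightarrow> Z" "x = finsum L (\<lambda>g. c g \<otimes>\<^bsub>L\<^esub> g) G" by (auto simp: Z_span_def)
  have f1: "(\<lambda>g. c g \<otimes>\<^bsub>L\<^esub> g) \<in> G \<rightarrow> carrier L" using c(1) G Z_subset by (auto intro!: R.m_closed)
  have "z \<otimes>\<^bsub>L\<^esub> x = finsum L (\<lambda>g. z \<otimes>\<^bsub>L\<^esub> (c g \<otimes>\<^bsub>L\<^esub> g)) G"
    using c f1 G z Z_subset by (simp add: R.finsum_rdistr subsetD)
  also have "\<dots> = finsum L (\<lambda>g. (\<lambda>g. z \<otimes>\<^bsub>L\<^esub> c g) g \<otimes>\<^bsub>L\<^esub> g) G"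
    using c(1) G Z_subset z
    by (intro R.finsum_cong') (auto simp: R.m_assoc Pi_def subset_iff intro!: R.m_closed)
  finally have "z \<otimes>\<^bsub>L\<^esub> x = finsum L (\<lambda>g. (\<lambda>g. z \<otimes>\<^bsub>L\<^esub> c g) g \<otimes>\<^bsub>L\<^esub> g) G" .
  moreover have "(\<lambda>g. z \<otimes>\<^bsub>L\<^esub> c g) \<in> G \<rightarrow> Z" using c(1) z by (auto intro: Z_mult)
  ultimately show "z \<otimes>\<^bsub>L\<^esub> x \<in> Z_span G" by (rule Z_spanI[rotated])
qed

lemma Z_span_empty: "Z_span {} = {\<zero>\<^bsub>L\<^esub>}"
  by (auto simp: Z_span_def)

lemma Z_span_insert_decomp:
  assumes G: "finite G" "g \<notin> G" "insert g G \<subseteq> carrier L" and y: "y \<in> Z_span (insert g G)"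
  shows "\<exists>x\<in>Z_span G. \<exists>z\<in>Z. y = x \<oplus>\<^bsub>L\<^esub> z \<otimes>\<^bsub>L\<^esub> g"
proof -
  obtain c where c: "c \<in> insert g G \<rightarrow> Z" "y = finsum L (\<lambda>g. c g \<otimes>\<^bsub>L\<^esub> g) (insert g G)"
    using y by (auto simp: Z_span_def)
  have f: "(\<lambda>g. c g \<otimes>\<^bsub>L\<^esub> g) \<in> G \<rightarrow> carrier L" "c g \<otimes>\<^bsub>L\<^esub> g \<in> carrier L"
    using c(1) G Z_subset by (auto intro!: R.m_closed)
  have "y = c g \<otimes>\<^bsub>L\<^esub> g \<oplus>\<^bsub>L\<^esub> finsum L (\<lambda>g. c g \<otimes>\<^bsub>L\<^esub> g) G"
    using c(2) G f by (simp add: R.finsum_insert)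
  also have "\<dots> = finsum L (\<lambda>g. c g \<otimes>\<^bsub>L\<^esub> g) G \<oplus>\<^bsub>L\<^esub> c g \<otimes>\<^bsub>L\<^esub> g"
    using f by (simp add: R.finsum_closed R.a_comm)
  finally have "y = finsum L (\<lambda>g. c g \<otimes>\<^bsub>L\<^esub> g) G \<oplus>\<^bsub>L\<^esub> c g \<otimes>\<^bsub>L\<^esub> g" .
  moreover have "finsum L (\<lambda>g. c g \<otimes>\<^bsub>L\<^esub> g) G \<in> Z_span G" using c(1) by (intro Z_spanI[of c]) auto
  moreover have "c g \<in> Z" using c(1) by auto
  ultimately show ?thesis by blast
qed

lemma ideal_of_Z_closed:
  assumes B: "B \<subseteq> Z" "\<zero>\<^bsub>L\<^esub> \<in> B" "\<And>a. a \<in> B \<Longrightarrow> \<ominus>\<^bsub>L\<^esub> a \<in> B"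
    "\<And>a b. a \<in> B \<Longrightarrow> b \<in> B \<Longrightarrow> a \<oplus>\<^bsub>L\<^esub> b \<in> B"
    "\<And>a r. a \<in> B \<Longrightarrow> r \<in> Z \<Longrightarrow> r \<otimes>\<^bsub>L\<^esub> a \<in> B"
  shows "ideal B (L\<lparr>carrier := Z\<rparr>)"
proof -
  have ZR: "ring (L\<lparr>carrier := Z\<rparr>)" using R.subring_is_ring[OF subring_Z] .
  interpret Zr: ring "L\<lparr>carrier := Z\<rparr>" by (rule ZR)
  have "subgroup B (add_monoid (L\<lparr>carrier := Z\<rparr>))"
  proof (rule Zr.add.subgroupI)
    show "B \<subseteq> carrier (L\<lparr>carrier := Z\<rparr>)" using B(1) by simp
    show "B \<noteq> {}" using B(2) by blast
  next
    fix a assume a: "a \<in> B"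
    have "a_inv (L\<lparr>carrier := Z\<rparr>) a = \<ominus>\<^bsub>L\<^esub> a"
      using a_inv_restrict_carrier[OF R.abelian_group_axioms Z_subset] a B(1) Z_neg by blast
    then show "\<ominus>\<^bsub>L\<lparr>carrier := Z\<rparr>\<^esub> a \<in> B" using B(3) a by simp
  next
    fix a b assume "a \<in> B" "b \<in> B"
    then show "a \<oplus>\<^bsub>L\<lparr>carrier := Z\<rparr>\<^esub> b \<in> B" using B(4) by simp
  qed
  then show ?thesis
  proof (rule idealI[OF ZR])
    fix a x assume "a \<in> B" "x \<in> carrier (L\<lparr>carrier := Z\<rparr>)"
    then show "x \<otimes>\<^bsub>L\<lparr>carrier := Z\<rparr>\<^esub> a \<in> B" using B(5) by simp
  next
    fix a x assume a: "a \<in> B" and x: "x \<in> carrier (L\<lparr>carrier := Z\<rparr>)"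
    have "a \<otimes>\<^bsub>L\<^esub> x = x \<otimes>\<^bsub>L\<^esub> a" using a x B(1) central[of a x] Z_subset by auto
    then show "a \<otimes>\<^bsub>L\<lparr>carrier := Z\<rparr>\<^esub> x \<in> B" using B(5) a x by simp
  qed
qed

lemma Z_ideal_dcc:
  "(\<And>n. ideal (I n) (L\<lparr>carrier := Z\<rparr>)) \<Longrightarrow> (\<And>n. I (Suc n) \<subseteq> I n) \<Longrightarrow> \<exists>m. \<forall>n\<ge>m. I n = I m"
  using artinian unfolding artinian_cring_def by blast

definition coeff_ideal :: "'a set \<Rightarrow> 'a \<Rightarrow> 'a set \<Rightarrow> 'a set" where
  "coeff_ideal G g N = {z\<in>Z. \<exists>x\<in>Z_span G. x \<oplus>\<^bsub>L\<^esub> z \<otimes>\<^bsub>L\<^esub> g \<in> N}"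

lemma coeff_ideal_mono: "N \<subseteq> N' \<Longrightarrow> coeff_ideal G g N \<subseteq> coeff_ideal G g N'"
  unfolding coeff_ideal_def by blast

lemma coeff_ideal_ideal:
  assumes G: "finite G" "G \<subseteq> carrier L" and g: "g \<in> carrier L" and N: "Z_submodule N"
  shows "ideal (coeff_ideal G g N) (L\<lparr>carrier := Z\<rparr>)"
proof -
  have span: "Z_submodule (Z_span G)" using Z_submodule_Z_span[OF G] .
  then have span_c: "Z_span G \<subseteq> carrier L" by (simp add: Z_submodule_def)
  show ?thesis
  proof (rule ideal_of_Z_closed)
  show "coeff_ideal G g N \<subseteq> Z" by (auto simp: coeff_ideal_def)
  have "\<zero>\<^bsub>L\<^esub> \<oplus>\<^bsub>L\<^esub> \<zero>\<^bsub>L\<^esub> \<otimes>\<^bsub>L\<^esub> g \<in> N" using g N by (simp add: Z_submodule_def)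
  then show "\<zero>\<^bsub>L\<^esub> \<in> coeff_ideal G g N"
    unfolding coeff_ideal_def using Z_zero span by (auto simp: Z_submodule_def)
next
    fix a assume "a \<in> coeff_ideal G g N"
    then obtain x where a: "a \<in> Z" "x \<in> Z_span G" "x \<oplus>\<^bsub>L\<^esub> a \<otimes>\<^bsub>L\<^esub> g \<in> N"
      by (auto simp: coeff_ideal_def)
    have "\<ominus>\<^bsub>L\<^esub> (x \<oplus>\<^bsub>L\<^esub> a \<otimes>\<^bsub>L\<^esub> g) = (\<ominus>\<^bsub>L\<^esub> x) \<oplus>\<^bsub>L\<^esub> (\<ominus>\<^bsub>L\<^esub> a) \<otimes>\<^bsub>L\<^esub> g"
      using a span_c Z_subset g by (simp add: subsetD R.minus_add R.l_minus)
    then show "\<ominus>\<^bsub>L\<^esub> a \<in> coeff_ideal G g N"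
      using Z_submodule_neg[OF N a(3)] Z_submodule_neg[OF span a(2)] Z_neg[OF a(1)]
      unfolding coeff_ideal_def by auto
  next
    fix a b assume "a \<in> coeff_ideal G g N" "b \<in> coeff_ideal G g N"
    then obtain x y where a: "a \<in> Z" "x \<in> Z_span G" "x \<oplus>\<^bsub>L\<^esub> a \<otimes>\<^bsub>L\<^esub> g \<in> N"
      and b: "b \<in> Z" "y \<in> Z_span G" "y \<oplus>\<^bsub>L\<^esub> b \<otimes>\<^bsub>L\<^esub> g \<in> N" by (auto simp: coeff_ideal_def)
    have "(x \<oplus>\<^bsub>L\<^esub> a \<otimes>\<^bsub>L\<^esub> g) \<oplus>\<^bsub>L\<^esub> (y \<oplus>\<^bsub>L\<^esub> b \<otimes>\<^bsub>L\<^esub> g) = (x \<oplus>\<^bsub>L\<^esub> y) \<oplus>\<^bsub>L\<^esub> (a \<oplus>\<^bsub>L\<^esub> b) \<otimes>\<^bsub>L\<^esub> g"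
      using a b span_c Z_subset g by (simp add: subsetD R.l_distr R.a_ac)
    moreover have "(x \<oplus>\<^bsub>L\<^esub> a \<otimes>\<^bsub>L\<^esub> g) \<oplus>\<^bsub>L\<^esub> (y \<oplus>\<^bsub>L\<^esub> b \<otimes>\<^bsub>L\<^esub> g) \<in> N"
      using N a(3) b(3) by (simp add: Z_submodule_def)
    moreover have "x \<oplus>\<^bsub>L\<^esub> y \<in> Z_span G" using span a(2) b(2) by (simp add: Z_submodule_def)
    ultimately show "a \<oplus>\<^bsub>L\<^esub> b \<in> coeff_ideal G g N"
      unfolding coeff_ideal_def using Z_add[OF a(1) b(1)] by auto
  next
    fix a r assume "a \<in> coeff_ideal G g N" and r: "r \<in> Z"
    then obtain x where a: "a \<in> Z" "x \<in> Z_span G" "x \<oplus>\<^bsub>L\<^esub> a \<otimes>\<^bsub>L\<^esub> g \<in> N"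
      by (auto simp: coeff_ideal_def)
    have "r \<otimes>\<^bsub>L\<^esub> (x \<oplus>\<^bsub>L\<^esub> a \<otimes>\<^bsub>L\<^esub> g) = r \<otimes>\<^bsub>L\<^esub> x \<oplus>\<^bsub>L\<^esub> (r \<otimes>\<^bsub>L\<^esub> a) \<otimes>\<^bsub>L\<^esub> g"
      using a r span_c Z_subset g by (simp add: subsetD R.r_distr R.m_assoc)
    moreover have "r \<otimes>\<^bsub>L\<^esub> (x \<oplus>\<^bsub>L\<^esub> a \<otimes>\<^bsub>L\<^esub> g) \<in> N" using N a(3) r by (simp add: Z_submodule_def)
    moreover have "r \<otimes>\<^bsub>L\<^esub> x \<in> Z_span G" using span a(2) r by (simp add: Z_submodule_def)
    ultimately show "r \<otimes>\<^bsub>L\<^esub> a \<in> coeff_ideal G g N"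
      unfolding coeff_ideal_def using Z_mult[OF r a(1)] by auto
  qed
qed

text \<open>Writing \<open>Z_span (insert g G) = Z_span G + Z g\<close>, a submodule \<open>N\<close> is determined, among the
  submodules contained in it, by its trace on \<open>Z_span G\<close> and by its ideal of \<open>g\<close>-coefficients.\<close>

lemma Z_submodule_subset_by_trace_coeff:
  assumes G: "finite G" "g \<notin> G" "insert g G \<subseteq> carrier L"
    and N: "Z_submodule N" "N \<subseteq> Z_span (insert g G)" and N': "Z_submodule N'" "N' \<subseteq> N"
    and trace: "N \<inter> Z_span G \<subseteq> N'" and coeff: "coeff_ideal G g N \<subseteq> coeff_ideal G g N'"
  shows "N \<subseteq> N'"
proof
  have span: "Z_submodule (Z_span G)" using Z_submodule_Z_span G by simp
  fix y assume y: "y \<in> N"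
  then obtain x z where xz: "x \<in> Z_span G" "z \<in> Z" "y = x \<oplus>\<^bsub>L\<^esub> z \<otimes>\<^bsub>L\<^esub> g"
    using Z_span_insert_decomp[OF G] N(2) by blast
  then have "z \<in> coeff_ideal G g N'" using y coeff unfolding coeff_ideal_def by blast
  then obtain x' where x': "x' \<in> Z_span G" "x' \<oplus>\<^bsub>L\<^esub> z \<otimes>\<^bsub>L\<^esub> g \<in> N'"
    by (auto simp: coeff_ideal_def)
  have c: "x \<in> carrier L" "x' \<in> carrier L" "z \<otimes>\<^bsub>L\<^esub> g \<in> carrier L"
    using xz x' span G Z_subset by (auto simp: Z_submodule_def)
  have "y \<ominus>\<^bsub>L\<^esub> (x' \<oplus>\<^bsub>L\<^esub> z \<otimes>\<^bsub>L\<^esub> g) = x \<ominus>\<^bsub>L\<^esub> x'"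
    using c unfolding xz(3) by (simp add: R.minus_eq R.minus_add R.a_ac R.r_neg2 R.r_neg)
  moreover have "y \<ominus>\<^bsub>L\<^esub> (x' \<oplus>\<^bsub>L\<^esub> z \<otimes>\<^bsub>L\<^esub> g) \<in> N"
    using x'(2) N'(2) by (intro Z_submodule_minus[OF N(1) y]) blast
  ultimately have "x \<ominus>\<^bsub>L\<^esub> x' \<in> N \<inter> Z_span G"
    using Z_submodule_minus[OF span xz(1) x'(1)] by simp
  then have "x \<ominus>\<^bsub>L\<^esub> x' \<in> N'" using trace by blast
  moreover have "y = (x \<ominus>\<^bsub>L\<^esub> x') \<oplus>\<^bsub>L\<^esub> (x' \<oplus>\<^bsub>L\<^esub> z \<otimes>\<^bsub>L\<^esub> g)"
    using c unfolding xz(3) by (simp add: R.minus_eq R.a_assoc R.r_neg1)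
  ultimately show "y \<in> N'" using x'(2) N'(1) by (simp add: Z_submodule_def)
qed

lemma Z_span_dcc:
  assumes "finite G"
  shows "G \<subseteq> carrier L \<Longrightarrow> (\<And>k. Z_submodule (N k)) \<Longrightarrow> (\<And>k. N k \<subseteq> Z_span G) \<Longrightarrow>
    (\<And>k. N (Suc k) \<subseteq> N k) \<Longrightarrow> \<exists>m. \<forall>n\<ge>m. N n = N m"
  using assms
proof (induct G arbitrary: N rule: finite_induct)
  case empty
  have "N k = {\<zero>\<^bsub>L\<^esub>}" for k
  proof -
    have "N k \<subseteq> {\<zero>\<^bsub>L\<^esub>}" using empty(3)[of k] Z_span_empty by simp
    moreover have "\<zero>\<^bsub>L\<^esub> \<in> N k" using empty(2)[of k] by (simp add: Z_submodule_def)
    ultimately show ?thesis by blast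
  qed
  then show ?case by auto
next
  case (insert g G)
  have G: "G \<subseteq> carrier L" and g: "g \<in> carrier L" using insert(4) by auto
  have span: "Z_submodule (Z_span G)" using Z_submodule_Z_span[OF insert(1) G] .
  have "\<exists>m. \<forall>n\<ge>m. N n \<inter> Z_span G = N m \<inter> Z_span G"
  proof (rule insert(3)[OF G])
    show "Z_submodule (N k \<inter> Z_span G)" for k
      using insert(5)[of k] span unfolding Z_submodule_def by (intro conjI; blast)
    show "N k \<inter> Z_span G \<subseteq> Z_span G" for k by blast
    show "N (Suc k) \<inter> Z_span G \<subseteq> N k \<inter> Z_span G" for k using insert(7)[of k] by blast
  qed
  then obtain m1 where m1: "\<And>n. n \<ge> m1 \<Longrightarrow> N n \<inter> Z_span G = N m1 \<inter> Z_span G" by blast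
  have "\<exists>m. \<forall>n\<ge>m. coeff_ideal G g (N n) = coeff_ideal G g (N m)"
  proof (rule Z_ideal_dcc)
    show "ideal (coeff_ideal G g (N n)) (L\<lparr>carrier := Z\<rparr>)" for n
      by (rule coeff_ideal_ideal[OF insert(1) G g insert(5)])
    show "coeff_ideal G g (N (Suc n)) \<subseteq> coeff_ideal G g (N n)" for n
      by (rule coeff_ideal_mono[OF insert(7)])
  qed
  then obtain m2 where m2: "\<And>n. n \<ge> m2 \<Longrightarrow> coeff_ideal G g (N n) = coeff_ideal G g (N m2)" by blast
  have antimono: "N n \<subseteq> N k" if "k \<le> n" for k n
    using lift_Suc_antimono_le[of N, OF insert(7) that] .
  have "N n = N (max m1 m2)" if n: "n \<ge> max m1 m2" for n
  proof
    show "N n \<subseteq> N (max m1 m2)" using antimono n by simp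
    show "N (max m1 m2) \<subseteq> N n"
    proof (rule Z_submodule_subset_by_trace_coeff[OF insert(1,2,4) insert(5) insert(6) insert(5)])
      show "N n \<subseteq> N (max m1 m2)" using antimono n by simp
      show "N (max m1 m2) \<inter> Z_span G \<subseteq> N n" using m1[of n] m1[of "max m1 m2"] n by auto
      show "coeff_ideal G g (N (max m1 m2)) \<subseteq> coeff_ideal G g (N n)"
        using m2[of n] m2[of "max m1 m2"] n by auto
    qed
  qed
  then show ?case by blast
qed

lemma left_ideal_dcc:
  assumes G: "finite G" "G \<subseteq> carrier L"
    and gen: "\<forall>x\<in>carrier L. \<exists>c\<in>G \<rightarrow> Z. x = finsum L (\<lambda>g. c g \<otimes>\<^bsub>L\<^esub> g) G"
    and I: "\<And>n. left_ideal L (I n)" "\<And>n. I (Suc n) \<subseteq> I n"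
  shows "\<exists>m. \<forall>n\<ge>m. I n = I m"
proof (rule Z_span_dcc[OF G(1) G(2)])
  show "I (Suc n) \<subseteq> I n" for n using I(2) .
  show "Z_submodule (I n)" for n using I(1)[of n] Z_subset unfolding left_ideal_iff Z_submodule_def by blast
  show "I n \<subseteq> Z_span G" for n
  proof
    fix x assume "x \<in> I n"
    then have "x \<in> carrier L" using I(1)[of n] by (auto simp: left_ideal_iff)
    then obtain c where "c \<in> G \<rightarrow> Z" "x = finsum L (\<lambda>g. c g \<otimes>\<^bsub>L\<^esub> g) G" using gen by blast
    then show "x \<in> Z_span G" by (rule Z_spanI)
  qed
qed

end

lemma artin_algebra_left_ideal_dcc:
  assumes A: "artin_algebra L" and I: "\<And>n. left_ideal L (I n)" "\<And>n. I (Suc n) \<subseteq> I n"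
  shows "\<exists>m. \<forall>n\<ge>m. I n = I m"
proof -
  obtain Z G where "ring L" and Z: "subring Z L" "\<forall>z\<in>Z. \<forall>x\<in>carrier L. z \<otimes>\<^bsub>L\<^esub> x = x \<otimes>\<^bsub>L\<^esub> z"
    "artinian_cring (L\<lparr>carrier := Z\<rparr>)" and G: "finite G" "G \<subseteq> carrier L"
    "\<forall>x\<in>carrier L. \<exists>c\<in>G \<rightarrow> Z. x = finsum L (\<lambda>g. c g \<otimes>\<^bsub>L\<^esub> g) G"
    using A unfolding artin_algebra_def by blast
  then interpret central_artinian_subring L Z
    by (intro central_artinian_subring.intro) auto
  show ?thesis by (rule left_ideal_dcc[of G I, OF G I])
qed

lemma artin_algebra_minimal_left_ideal:
  assumes A: "artin_algebra L" and \<I>: "\<I> \<noteq> {}" "\<And>I. I \<in> \<I> \<Longrightarrow> left_ideal L I"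
  shows "\<exists>I\<in>\<I>. \<forall>I'\<in>\<I>. I' \<subseteq> I \<longrightarrow> I' = I"
proof (rule ccontr)
  assume "\<not> ?thesis"
  then have "\<forall>I\<in>\<I>. \<exists>I'. I' \<in> \<I> \<and> I' \<subseteq> I \<and> I' \<noteq> I" by blast
  then have "\<exists>smaller. \<forall>I\<in>\<I>. smaller I \<in> \<I> \<and> smaller I \<subseteq> I \<and> smaller I \<noteq> I"
    by (rule bchoice)
  then obtain smaller where smaller: "\<forall>I\<in>\<I>. smaller I \<in> \<I> \<and> smaller I \<subseteq> I \<and> smaller I \<noteq> I"
    by blast
  obtain I0 where I0: "I0 \<in> \<I>" using \<I> by blast
  define chain where "chain n = (smaller ^^ n) I0" for n
  have chain_Suc: "chain (Suc n) = smaller (chain n)" for n by (simp add: chain_def)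
  have chain_in: "chain n \<in> \<I>" for n
  proof (induct n)
    case 0
    then show ?case using I0 by (simp add: chain_def)
  next
    case (Suc n)
    then show ?case using smaller chain_Suc by simp
  qed
  have "\<exists>m. \<forall>n\<ge>m. chain n = chain m"
  proof (rule artin_algebra_left_ideal_dcc[OF A])
    show "left_ideal L (chain n)" for n using chain_in \<I>(2) by blast
    show "chain (Suc n) \<subseteq> chain n" for n using smaller chain_in[of n] chain_Suc by simp
  qed
  then obtain m where m: "\<forall>n\<ge>m. chain n = chain m" by blast
  have "chain (Suc m) = chain m" using m[rule_format, of "Suc m"] by simp
  then show False using smaller chain_in[of m] chain_Suc by simp
qed

section \<open>Semisimplicity modulo the radical\<close>

lemma left_ideal_Inter:
  assumes "ring L" "\<And>m. m \<in> F \<Longrightarrow> left_ideal L m"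
  shows "left_ideal L (carrier L \<inter> \<Inter>F)"
proof -
  interpret RM: lmod L "reg_mod L" using lmodule_reg_mod[OF assms(1)] by (rule lmodI)
  show ?thesis using RM.submodule_Inter assms(2) unfolding left_ideal_def by simp
qed

lemma finsum_left_ideal:
  assumes r: "ring L" and I: "left_ideal L I" and A: "finite A"
    and f: "f \<in> A \<rightarrow> carrier L" "\<And>x. x \<in> A \<Longrightarrow> f x \<in> I"
  shows "finsum L f A \<in> I"
proof -
  interpret R: ring L by (rule r)
  show ?thesis using A f
  proof (induct A)
    case empty
    then show ?case using I by (simp add: left_ideal_iff)
  next
    case (insert a A)
    then have "finsum L f (insert a A) = f a \<oplus>\<^bsub>L\<^esub> finsum L f A" by (simp add: R.finsum_insert)
    then show ?case using insert I by (simp add: left_ideal_iff)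
  qed
qed

lemma artin_algebra_jac_rad_finite_Inter:
  assumes A: "artin_algebra L"
  shows "\<exists>F. finite F \<and> F \<subseteq> {m. maximal_left_ideal L m} \<and> carrier L \<inter> \<Inter>F \<subseteq> jac_rad L"
proof -
  have r: "ring L" using A by (simp add: artin_algebra_def)
  let ?Maxs = "{m. maximal_left_ideal L m}"
  let ?\<I> = "{carrier L \<inter> \<Inter>F | F. finite F \<and> F \<subseteq> ?Maxs}"
  have "left_ideal L I" if I: "I \<in> ?\<I>" for I
  proof -
    obtain F where "I = carrier L \<inter> \<Inter>F" "F \<subseteq> ?Maxs" using I by blast
    then show ?thesis using left_ideal_Inter[OF r, of F] by (auto simp: maximal_left_ideal_def)
  qed
  then obtain I0 where I0: "I0 \<in> ?\<I>" and I0min: "\<forall>I'\<in>?\<I>. I' \<subseteq> I0 \<longrightarrow> I' = I0"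
    using artin_algebra_minimal_left_ideal[OF A, of ?\<I>] by blast
  obtain F0 where F0: "I0 = carrier L \<inter> \<Inter>F0" "finite F0" "F0 \<subseteq> ?Maxs" using I0 by blast
  have "I0 \<subseteq> jac_rad L"
  proof
    fix x assume x: "x \<in> I0"
    show "x \<in> jac_rad L"
    proof (rule jac_radI)
      show "x \<in> carrier L" using x F0 by blast
      fix m assume m: "maximal_left_ideal L m"
      let ?I1 = "carrier L \<inter> \<Inter>(insert m F0)"
      have "?I1 \<in> ?\<I>" using F0 m by blast
      moreover have "?I1 \<subseteq> I0" using F0(1) by blast
      ultimately have "?I1 = I0" using I0min by blast
      then show "x \<in> m" using x by blast
    qed
  qed
  then show ?thesis using F0 by blast
qed

text \<open>Elementwise form of the semisimplicity of \<open>L / rad L\<close>: modulo the radical, \<open>\<one>\<close> is the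
  sum of the \<open>e m\<close>, and \<open>m e m \<subseteq> rad L\<close> makes \<open>(L e m + rad L) / rad L\<close> a quotient of the
  simple module \<open>L / m\<close>.\<close>

definition rad_splitting :: "'a ring \<Rightarrow> 'a set set \<Rightarrow> ('a set \<Rightarrow> 'a) \<Rightarrow> bool" where
  "rad_splitting L F e \<longleftrightarrow> finite F \<and> (\<forall>m\<in>F. maximal_left_ideal L m) \<and> e \<in> F \<rightarrow> carrier L \<and>
     (\<forall>m\<in>F. \<forall>l\<in>m. l \<otimes>\<^bsub>L\<^esub> e m \<in> jac_rad L) \<and> \<one>\<^bsub>L\<^esub> \<ominus>\<^bsub>L\<^esub> finsum L e F \<in> jac_rad L"

lemma rad_splittingI:
  assumes r: "ring L" and F: "finite F" "F \<subseteq> {m. maximal_left_ideal L m}"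
    and FJ: "carrier L \<inter> \<Inter>F \<subseteq> jac_rad L"
    and e: "\<And>m. m \<in> F \<Longrightarrow> e m \<in> carrier L \<and> (\<forall>m'\<in>F - {m}. e m \<in> m') \<and> \<one>\<^bsub>L\<^esub> \<ominus>\<^bsub>L\<^esub> e m \<in> m"
  shows "rad_splitting L F e"
proof -
  interpret R: ring L by (rule r)
  have eF: "e \<in> F \<rightarrow> carrier L" using e by blast
  have mI: "\<And>m. m \<in> F \<Longrightarrow> left_ideal L m" using F(2) by (auto simp: maximal_left_ideal_def)
  have rad: "l \<otimes>\<^bsub>L\<^esub> e m \<in> jac_rad L" if m: "m \<in> F" and l: "l \<in> m" for m l
  proof -
    have em: "e m \<in> carrier L" "\<one>\<^bsub>L\<^esub> \<ominus>\<^bsub>L\<^esub> e m \<in> m" using e m by auto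
    have lc: "l \<in> carrier L" using mI[OF m] l by (auto simp: left_ideal_iff)
    have "l \<otimes>\<^bsub>L\<^esub> e m \<in> m'" if m': "m' \<in> F" for m'
    proof (cases "m' = m")
      case True
      have "l \<otimes>\<^bsub>L\<^esub> (\<one>\<^bsub>L\<^esub> \<ominus>\<^bsub>L\<^esub> e m) \<in> m" using mI[OF m] em lc by (simp add: left_ideal_iff)
      then have "l \<ominus>\<^bsub>L\<^esub> l \<otimes>\<^bsub>L\<^esub> (\<one>\<^bsub>L\<^esub> \<ominus>\<^bsub>L\<^esub> e m) \<in> m"
        using mI[OF m] l by (simp add: left_ideal_iff R.minus_eq)
      moreover have "l \<ominus>\<^bsub>L\<^esub> l \<otimes>\<^bsub>L\<^esub> (\<one>\<^bsub>L\<^esub> \<ominus>\<^bsub>L\<^esub> e m) = l \<otimes>\<^bsub>L\<^esub> e m"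
        using lc em by (simp add: R.minus_eq R.r_distr R.r_minus R.minus_add R.r_neg2)
      ultimately show ?thesis using True by simp
    next
      case False
      then have "e m \<in> m'" using e m m' by blast
      then show ?thesis using mI[OF m'] lc by (simp add: left_ideal_iff)
    qed
    moreover have "l \<otimes>\<^bsub>L\<^esub> e m \<in> carrier L" using lc em by simp
    ultimately show ?thesis using FJ by blast
  qed
  have "\<one>\<^bsub>L\<^esub> \<ominus>\<^bsub>L\<^esub> finsum L e F \<in> m" if m: "m \<in> F" for m
  proof -
    have eF': "e \<in> (F - {m}) \<rightarrow> carrier L" using eF by blast
    have em: "e m \<in> carrier L" "\<one>\<^bsub>L\<^esub> \<ominus>\<^bsub>L\<^esub> e m \<in> m" using e m by auto
    have "finsum L e F = e m \<oplus>\<^bsub>L\<^esub> finsum L e (F - {m})"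
      using R.finsum_insert[of "F - {m}" m e] F(1) eF' em m by (simp add: insert_absorb)
    moreover have "finsum L e (F - {m}) \<in> m"
      by (rule finsum_left_ideal[OF r mI[OF m]]) (use F(1) eF' e m in auto)
    moreover have "finsum L e (F - {m}) \<in> carrier L" using eF' by (simp add: R.finsum_closed)
    ultimately have "\<one>\<^bsub>L\<^esub> \<ominus>\<^bsub>L\<^esub> finsum L e F = (\<one>\<^bsub>L\<^esub> \<ominus>\<^bsub>L\<^esub> e m) \<oplus>\<^bsub>L\<^esub> \<ominus>\<^bsub>L\<^esub> finsum L e (F - {m})"
      using em by (simp add: R.minus_eq R.minus_add R.a_assoc)
    moreover have "(\<one>\<^bsub>L\<^esub> \<ominus>\<^bsub>L\<^esub> e m) \<oplus>\<^bsub>L\<^esub> \<ominus>\<^bsub>L\<^esub> finsum L e (F - {m}) \<in> m"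
      using mI[OF m] em \<open>finsum L e (F - {m}) \<in> m\<close> by (simp add: left_ideal_iff)
    ultimately show ?thesis by simp
  qed
  moreover have "\<one>\<^bsub>L\<^esub> \<ominus>\<^bsub>L\<^esub> finsum L e F \<in> carrier L" using eF by (simp add: R.finsum_closed)
  ultimately have "\<one>\<^bsub>L\<^esub> \<ominus>\<^bsub>L\<^esub> finsum L e F \<in> jac_rad L" using FJ by blast
  then show ?thesis using F eF rad unfolding rad_splitting_def by blast
qed

text \<open>For an irredundant finite family of maximal left ideals meeting in the radical, each
  \<open>m\<close> is comaximal with the intersection of the others; this yields the elements \<open>e m\<close>.\<close>

lemma artin_algebra_rad_splitting:
  assumes A: "artin_algebra L"
  shows "\<exists>F e. rad_splitting L F e"
proof -
  have r: "ring L" using A by (simp add: artin_algebra_def)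
  interpret R: ring L by (rule r)
  define P where "P F \<longleftrightarrow> finite F \<and> F \<subseteq> {m. maximal_left_ideal L m} \<and> carrier L \<inter> \<Inter>F \<subseteq> jac_rad L"
    for F
  obtain F0 where "P F0" using artin_algebra_jac_rad_finite_Inter[OF A] by (auto simp: P_def)
  then obtain F where PF: "P F" and Fmin: "\<And>F'. P F' \<Longrightarrow> card F \<le> card F'"
    using ex_has_least_nat[of P F0 card] by blast
  have Ff: "finite F" and FM: "F \<subseteq> {m. maximal_left_ideal L m}" and FJ: "carrier L \<inter> \<Inter>F \<subseteq> jac_rad L"
    using PF by (simp_all add: P_def)
  have "\<exists>e. e \<in> carrier L \<and> (\<forall>m'\<in>F - {m}. e \<in> m') \<and> \<one>\<^bsub>L\<^esub> \<ominus>\<^bsub>L\<^esub> e \<in> m" if mF: "m \<in> F" for m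
  proof -
    have "\<not> P (F - {m})" using Fmin card_Diff1_less[OF Ff mF] by (meson leD)
    then obtain a where a: "a \<in> carrier L" "a \<in> \<Inter>(F - {m})" "a \<notin> jac_rad L"
      using Ff FM by (auto simp: P_def)
    have mm: "maximal_left_ideal L m" using FM mF by blast
    have "a \<notin> m"
    proof
      assume "a \<in> m"
      then have "a \<in> carrier L \<inter> \<Inter>F" using a(1,2) by blast
      then show False using FJ a(3) by blast
    qed
    then obtain p \<mu> where p: "p \<in> m" "\<mu> \<in> carrier L" "\<one>\<^bsub>L\<^esub> = p \<oplus>\<^bsub>L\<^esub> \<mu> \<otimes>\<^bsub>L\<^esub> a"
      using maximal_left_ideal_comaximal[OF r mm a(1)] by blast
    have "\<forall>m'\<in>F - {m}. \<mu> \<otimes>\<^bsub>L\<^esub> a \<in> m'"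
    proof
      fix m' assume m': "m' \<in> F - {m}"
      then have "left_ideal L m'" using FM by (auto simp: maximal_left_ideal_def)
      moreover have "a \<in> m'" using a(2) m' by blast
      ultimately show "\<mu> \<otimes>\<^bsub>L\<^esub> a \<in> m'" using p(2) by (simp add: left_ideal_iff)
    qed
    moreover have "\<one>\<^bsub>L\<^esub> \<ominus>\<^bsub>L\<^esub> \<mu> \<otimes>\<^bsub>L\<^esub> a = p"
      using p maximal_left_ideal_subset[OF mm] a(1) by (simp add: subsetD R.minus_eq R.a_assoc R.r_neg)
    moreover have "\<mu> \<otimes>\<^bsub>L\<^esub> a \<in> carrier L" using p(2) a(1) by simp
    ultimately show ?thesis using p(1) by auto
  qed
  then have "\<exists>e. \<forall>m\<in>F. e m \<in> carrier L \<and> (\<forall>m'\<in>F - {m}. e m \<in> m') \<and> \<one>\<^bsub>L\<^esub> \<ominus>\<^bsub>L\<^esub> e m \<in> m"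
    by (intro bchoice ballI)
  then obtain e where "\<forall>m\<in>F. e m \<in> carrier L \<and> (\<forall>m'\<in>F - {m}. e m \<in> m') \<and> \<one>\<^bsub>L\<^esub> \<ominus>\<^bsub>L\<^esub> e m \<in> m"
    by blast
  then have "rad_splitting L F e" using rad_splittingI[OF r Ff FM FJ] by blast
  then show ?thesis by blast
qed

section \<open>Radical cube zero\<close>

context lmod
begin

lemma radA_mod_generators_subset: "{r \<odot>\<^bsub>M\<^esub> x | r x. r \<in> jac_rad L \<and> x \<in> carrier M} \<subseteq> carrier M"
  using jac_rad_subset[of L] by blast

lemma radA_mod_submodule: "submodule L M (radA_mod L M)"
  unfolding radA_mod_def using mod_span_submodule[OF radA_mod_generators_subset] .

lemma jac_rad_smult_in_radA_mod: "\<rho> \<in> jac_rad L \<Longrightarrow> y \<in> carrier M \<Longrightarrow> \<rho> \<odot>\<^bsub>M\<^esub> y \<in> radA_mod L M"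
  unfolding radA_mod_def by (rule mod_span_inc[OF radA_mod_generators_subset]) blast

lemma radA_mod_simple:
  assumes "simple_mod L M"
  shows "radA_mod L M = {\<zero>\<^bsub>M\<^esub>}"
proof -
  have "{r \<odot>\<^bsub>M\<^esub> x | r x. r \<in> jac_rad L \<and> x \<in> carrier M} \<subseteq> {\<zero>\<^bsub>M\<^esub>}"
    using simple_mod_jac_rad_smult[OF assms] by blast
  moreover have "submodule L M {\<zero>\<^bsub>M\<^esub>}" by (auto simp: submodule_def)
  ultimately have "radA_mod L M \<subseteq> {\<zero>\<^bsub>M\<^esub>}" unfolding radA_mod_def by (rule mod_span_least[rotated])
  then show ?thesis using submoduleD(2)[OF radA_mod_submodule] by blast
qed

end

lemma socle_submodule: "ring L \<Longrightarrow> submodule L (reg_mod L) (socle L)"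
  unfolding socle_def
  by (rule lmod.mod_span_submodule[OF lmodI[OF lmodule_reg_mod]])
    (auto simp: simple_submodule_def submodule_def)

lemma simple_submodule_subset_socle:
  assumes "ring L" "simple_submodule L (reg_mod L) N"
  shows "N \<subseteq> socle L"
proof -
  have "\<Union>{N. simple_submodule L (reg_mod L) N} \<subseteq> carrier (reg_mod L)"
    by (auto simp: simple_submodule_def submodule_def)
  then show ?thesis unfolding socle_def
    using lmod.mod_span_inc[OF lmodI[OF lmodule_reg_mod[OF assms(1)]]] assms(2) by blast
qed

text \<open>With \<open>rad\<^sup>3 L = 0\<close>, each \<open>e m s u\<close> (\<open>s, u \<in> rad L\<close>) is killed by the maximal left
  ideal \<open>m\<close> and so spans a simple left ideal, while \<open>(\<one> - \<Sum>e) s u = 0\<close>.\<close>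

lemma jac_rad_mult_in_socle:
  assumes r: "ring L"
    and rad3: "\<forall>x\<in>jac_rad L. \<forall>y\<in>jac_rad L. \<forall>z\<in>jac_rad L. x \<otimes>\<^bsub>L\<^esub> y \<otimes>\<^bsub>L\<^esub> z = \<zero>\<^bsub>L\<^esub>"
    and D: "rad_splitting L F e" and s: "s \<in> jac_rad L" and u: "u \<in> jac_rad L"
  shows "s \<otimes>\<^bsub>L\<^esub> u \<in> socle L"
proof -
  interpret R: ring L by (rule r)
  interpret RM: lmod L "reg_mod L" using lmodule_reg_mod[OF r] by (rule lmodI)
  have F: "finite F" "\<forall>m\<in>F. maximal_left_ideal L m" "e \<in> F \<rightarrow> carrier L"
    "\<forall>m\<in>F. \<forall>l\<in>m. l \<otimes>\<^bsub>L\<^esub> e m \<in> jac_rad L" "\<one>\<^bsub>L\<^esub> \<ominus>\<^bsub>L\<^esub> finsum L e F \<in> jac_rad L"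
    using D by (simp_all add: rad_splitting_def)
  have sc: "s \<in> carrier L" and uc: "u \<in> carrier L" using s u jac_rad_subset[of L] by auto
  have soc: "submodule L (reg_mod L) (socle L)" using socle_submodule[OF r] .
  show ?thesis
  proof (rule RM.submodule_mem_split_one[OF F(1) F(3) soc])
    show "s \<otimes>\<^bsub>L\<^esub> u \<in> carrier (reg_mod L)" using sc uc by simp
    have "(\<one>\<^bsub>L\<^esub> \<ominus>\<^bsub>L\<^esub> finsum L e F) \<otimes>\<^bsub>L\<^esub> (s \<otimes>\<^bsub>L\<^esub> u) = \<zero>\<^bsub>L\<^esub>"
      using rad3 F(5) s u F(3) sc uc by (simp add: R.m_assoc[symmetric] R.finsum_closed)
    then show "(\<one>\<^bsub>L\<^esub> \<ominus>\<^bsub>L\<^esub> finsum L e F) \<odot>\<^bsub>reg_mod L\<^esub> (s \<otimes>\<^bsub>L\<^esub> u) \<in> socle L"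
      using submoduleD(2)[OF soc] by simp
  next
    fix m assume m: "m \<in> F"
    let ?w = "e m \<otimes>\<^bsub>L\<^esub> (s \<otimes>\<^bsub>L\<^esub> u)"
    have emc: "e m \<in> carrier L" using F(3) m by blast
    have wc: "?w \<in> carrier L" using emc sc uc by simp
    show "e m \<odot>\<^bsub>reg_mod L\<^esub> (s \<otimes>\<^bsub>L\<^esub> u) \<in> socle L"
    proof (cases "?w = \<zero>\<^bsub>L\<^esub>")
      case True
      then show ?thesis using submoduleD(2)[OF soc] by simp
    next
      case False
      have mm: "maximal_left_ideal L m" using F(2) m by blast
      have "a \<odot>\<^bsub>reg_mod L\<^esub> ?w = \<zero>\<^bsub>reg_mod L\<^esub>" if a: "a \<in> m" for a
      proof -
        have ac: "a \<in> carrier L" using a maximal_left_ideal_subset[OF mm] by blast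
        have "a \<otimes>\<^bsub>L\<^esub> e m \<in> jac_rad L" using F(4) m a by blast
        then have "a \<otimes>\<^bsub>L\<^esub> e m \<otimes>\<^bsub>L\<^esub> s \<otimes>\<^bsub>L\<^esub> u = \<zero>\<^bsub>L\<^esub>" using rad3 s u by blast
        then show ?thesis using ac emc sc uc by (simp add: R.m_assoc)
      qed
      then have "simple_submodule L (reg_mod L) (cyclic_submod L (reg_mod L) ?w)"
        using RM.cyclic_submod_simple[OF mm] wc False by simp
      then have "cyclic_submod L (reg_mod L) ?w \<subseteq> socle L" by (rule simple_submodule_subset_socle[OF r])
      then show ?thesis using RM.cyclic_submod_self wc by auto
    qed
  qed
qed

text \<open>The set below is used instead of the elements killed by \<open>jac_rad L\<close>, since
  \<open>jac_rad L\<close> is only known to be a left ideal.\<close>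

lemma (in lmod) jac_rad_mult_annihilator_submodule:
  "submodule L M {y\<in>carrier M. \<forall>\<rho>\<in>jac_rad L. \<forall>l\<in>carrier L. (\<rho> \<otimes>\<^bsub>L\<^esub> l) \<odot>\<^bsub>M\<^esub> y = \<zero>\<^bsub>M\<^esub>}"
  (is "submodule L M ?K")
  unfolding submodule_def
proof (intro conjI ballI)
  have Jc: "\<And>a. a \<in> jac_rad L \<Longrightarrow> a \<in> carrier L" using jac_rad_subset[of L] by blast
  show "?K \<subseteq> carrier M" by auto
  show "\<zero>\<^bsub>M\<^esub> \<in> ?K" using Jc by simp
  fix x assume x: "x \<in> ?K"
  show "\<ominus>\<^bsub>M\<^esub> x \<in> ?K" using x Jc by (simp add: smult_neg)
  {
    fix y assume "y \<in> ?K"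
    then show "x \<oplus>\<^bsub>M\<^esub> y \<in> ?K" using x Jc by (simp add: smult_r_distr)
  next
    fix a assume a: "a \<in> carrier L"
    have "(\<rho> \<otimes>\<^bsub>L\<^esub> l) \<odot>\<^bsub>M\<^esub> (a \<odot>\<^bsub>M\<^esub> x) = \<zero>\<^bsub>M\<^esub>" if "\<rho> \<in> jac_rad L" "l \<in> carrier L" for \<rho> l
    proof -
      have "(\<rho> \<otimes>\<^bsub>L\<^esub> l) \<odot>\<^bsub>M\<^esub> (a \<odot>\<^bsub>M\<^esub> x) = (\<rho> \<otimes>\<^bsub>L\<^esub> (l \<otimes>\<^bsub>L\<^esub> a)) \<odot>\<^bsub>M\<^esub> x"
        using that a x Jc by (simp add: smult_assoc[symmetric] R.m_assoc)
      also have "\<dots> = \<zero>\<^bsub>M\<^esub>" using x that a by simp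
      finally show ?thesis .
    qed
    then show "a \<odot>\<^bsub>M\<^esub> x \<in> ?K" using a x by simp
  }
qed

lemma A_module_jac_rad_kills_radA_mod:
  assumes r: "ring L"
    and rad3: "\<forall>x\<in>jac_rad L. \<forall>y\<in>jac_rad L. \<forall>z\<in>jac_rad L. x \<otimes>\<^bsub>L\<^esub> y \<otimes>\<^bsub>L\<^esub> z = \<zero>\<^bsub>L\<^esub>"
    and D: "rad_splitting L F e" and AB: "A_module L B"
    and rho: "\<rho> \<in> jac_rad L" and y: "y \<in> radA_mod L B"
  shows "\<rho> \<odot>\<^bsub>B\<^esub> y = \<zero>\<^bsub>B\<^esub>"
proof -
  interpret R: ring L by (rule r)
  have lmB: "lmodule L B" and socle_kills: "\<forall>s\<in>socle L. \<forall>x\<in>carrier B. s \<odot>\<^bsub>B\<^esub> x = \<zero>\<^bsub>B\<^esub>"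
    using AB by (simp_all add: A_module_def)
  interpret B: lmod L B using lmB by (rule lmodI)
  have Jc: "\<And>a. a \<in> jac_rad L \<Longrightarrow> a \<in> carrier L" using jac_rad_subset[of L] by blast
  define K where "K = {y\<in>carrier B. \<forall>\<rho>\<in>jac_rad L. \<forall>l\<in>carrier L. (\<rho> \<otimes>\<^bsub>L\<^esub> l) \<odot>\<^bsub>B\<^esub> y = \<zero>\<^bsub>B\<^esub>}"
  have "{r \<odot>\<^bsub>B\<^esub> x | r x. r \<in> jac_rad L \<and> x \<in> carrier B} \<subseteq> K"
  proof
    fix z assume "z \<in> {r \<odot>\<^bsub>B\<^esub> x | r x. r \<in> jac_rad L \<and> x \<in> carrier B}"
    then obtain r0 x where h: "r0 \<in> jac_rad L" "x \<in> carrier B" "z = r0 \<odot>\<^bsub>B\<^esub> x" by blast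
    have "(\<rho> \<otimes>\<^bsub>L\<^esub> l) \<odot>\<^bsub>B\<^esub> z = \<zero>\<^bsub>B\<^esub>" if "\<rho> \<in> jac_rad L" "l \<in> carrier L" for \<rho> l
    proof -
      have "(\<rho> \<otimes>\<^bsub>L\<^esub> l) \<odot>\<^bsub>B\<^esub> z = (\<rho> \<otimes>\<^bsub>L\<^esub> (l \<otimes>\<^bsub>L\<^esub> r0)) \<odot>\<^bsub>B\<^esub> x"
        using that h Jc by (simp add: B.smult_assoc[symmetric] R.m_assoc)
      moreover have "\<rho> \<otimes>\<^bsub>L\<^esub> (l \<otimes>\<^bsub>L\<^esub> r0) \<in> socle L"
        using jac_rad_mult_in_socle[OF r rad3 D that(1) jac_rad_lmult[OF r that(2) h(1)]] .
      ultimately show ?thesis using socle_kills h(2) by simp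
    qed
    moreover have "z \<in> carrier B" using h Jc by simp
    ultimately show "z \<in> K" by (simp add: K_def)
  qed
  then have "radA_mod L B \<subseteq> K" unfolding radA_mod_def K_def
    by (rule B.mod_span_least[OF B.jac_rad_mult_annihilator_submodule])
  then have "(\<rho> \<otimes>\<^bsub>L\<^esub> \<one>\<^bsub>L\<^esub>) \<odot>\<^bsub>B\<^esub> y = \<zero>\<^bsub>B\<^esub>" using y rho by (simp add: K_def subset_iff)
  then show ?thesis using rho Jc by simp
qed

section \<open>Simple direct summands\<close>

context lmod
begin

lemma exists_maximal_submodule_avoiding:
  assumes N0: "submodule L M N0" and d: "d \<notin> N0"
  shows "\<exists>N. submodule L M N \<and> N0 \<subseteq> N \<and> d \<notin> N \<and>
    (\<forall>N'. submodule L M N' \<and> N \<subseteq> N' \<and> d \<notin> N' \<longrightarrow> N' = N)"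
proof -
  define \<Phi> where "\<Phi> = {N. submodule L M N \<and> N0 \<subseteq> N \<and> d \<notin> N}"
  have "\<exists>N\<in>\<Phi>. \<forall>N'\<in>\<Phi>. N \<subseteq> N' \<longrightarrow> N' = N"
  proof (rule subset_Zorn_nonempty)
    show "\<Phi> \<noteq> {}" using N0 d unfolding \<Phi>_def by blast
  next
    fix \<C> assume ne: "\<C> \<noteq> {}" and ch: "subset.chain \<Phi> \<C>"
    have sub: "\<C> \<subseteq> \<Phi>" and cmp: "\<And>N1 N2. N1 \<in> \<C> \<Longrightarrow> N2 \<in> \<C> \<Longrightarrow> N1 \<subseteq> N2 \<or> N2 \<subseteq> N1"
      using ch by (auto simp: subset.chain_def)
    have "submodule L M (\<Union>\<C>)"
    proof (rule submodule_Union_chain[OF ne])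
      show "submodule L M N" if "N \<in> \<C>" for N using that sub by (auto simp: \<Phi>_def)
    qed (rule cmp)
    moreover have "N0 \<subseteq> \<Union>\<C>" using ne sub by (auto simp: \<Phi>_def)
    moreover have "d \<notin> \<Union>\<C>" using sub by (auto simp: \<Phi>_def)
    ultimately show "\<Union>\<C> \<in> \<Phi>" by (simp add: \<Phi>_def)
  qed
  then obtain N where "N \<in> \<Phi>" "\<forall>N'\<in>\<Phi>. N \<subseteq> N' \<longrightarrow> N' = N" by blast
  then show ?thesis by (intro exI[of _ N]) (auto simp: \<Phi>_def)
qed

text \<open>If \<open>N\<close> is maximal among the submodules avoiding \<open>d\<close>, then \<open>N + L w\<close> contains \<open>d\<close> for
  every \<open>w \<notin> N\<close>; when a maximal left ideal \<open>j\<close> maps \<open>w\<close> into \<open>N\<close>, comaximality of \<open>j\<close> with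
  the coefficient of \<open>w\<close> puts \<open>w\<close> back into \<open>N + L d\<close>.\<close>

lemma mem_set_sum_maximal_avoiding:
  assumes N: "submodule L M N" and d: "d \<in> carrier M" "d \<notin> N"
    and N_max: "\<And>N'. submodule L M N' \<Longrightarrow> N \<subseteq> N' \<Longrightarrow> d \<notin> N' \<Longrightarrow> N' = N"
    and j: "maximal_left_ideal L j" and w: "w \<in> carrier M" and jw: "\<And>a. a \<in> j \<Longrightarrow> a \<odot>\<^bsub>M\<^esub> w \<in> N"
  shows "w \<in> set_sum M N (cyclic_submod L M d)"
proof -
  have Ld: "submodule L M (cyclic_submod L M d)" using cyclic_submod_submodule d(1) .
  have Lw: "submodule L M (cyclic_submod L M w)" using cyclic_submod_submodule w .
  have SS: "submodule L M (set_sum M N (cyclic_submod L M d))" using set_sum_submodule[OF N Ld] .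
  have NSS: "N \<subseteq> set_sum M N (cyclic_submod L M d)" using set_sum_upper1[OF N Ld] .
  show ?thesis
  proof (cases "w \<in> N")
    case True
    then show ?thesis using NSS by blast
  next
    case False
    let ?N' = "set_sum M N (cyclic_submod L M w)"
    have "w \<in> ?N'" using set_sum_upper2[OF N Lw] cyclic_submod_self w by blast
    then have "?N' \<noteq> N" using False by blast
    then have "d \<in> ?N'" using N_max[OF set_sum_submodule[OF N Lw] set_sum_upper1[OF N Lw]] by blast
    then obtain n l where nl: "n \<in> N" "l \<in> carrier L" "d = n \<oplus>\<^bsub>M\<^esub> l \<odot>\<^bsub>M\<^esub> w"
      unfolding set_sum_def cyclic_submod_def by blast
    have nC: "n \<in> carrier M" using nl(1) submoduleD(1)[OF N] by blast
    have "l \<notin> j"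
    proof
      assume "l \<in> j"
      then have "d \<in> N" using nl jw submoduleD(3)[OF N] by simp
      then show False using d(2) by simp
    qed
    then obtain p \<mu> where p: "p \<in> j" "\<mu> \<in> carrier L" "\<one>\<^bsub>L\<^esub> = p \<oplus>\<^bsub>L\<^esub> \<mu> \<otimes>\<^bsub>L\<^esub> l"
      using maximal_left_ideal_comaximal[OF R.ring_axioms j nl(2)] by blast
    have pc: "p \<in> carrier L" using p(1) maximal_left_ideal_subset[OF j] by blast
    have "w = \<one>\<^bsub>L\<^esub> \<odot>\<^bsub>M\<^esub> w" using w by simp
    also have "\<dots> = p \<odot>\<^bsub>M\<^esub> w \<oplus>\<^bsub>M\<^esub> \<mu> \<odot>\<^bsub>M\<^esub> (l \<odot>\<^bsub>M\<^esub> w)"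
      unfolding p(3) using pc p(2) nl(2) w by (simp add: smult_l_distr smult_assoc)
    also have "l \<odot>\<^bsub>M\<^esub> w = \<ominus>\<^bsub>M\<^esub> n \<oplus>\<^bsub>M\<^esub> d" using nl(3) nC nl(2) w by (simp add: M.r_neg1)
    finally have "p \<odot>\<^bsub>M\<^esub> w \<oplus>\<^bsub>M\<^esub> \<mu> \<odot>\<^bsub>M\<^esub> (\<ominus>\<^bsub>M\<^esub> n \<oplus>\<^bsub>M\<^esub> d) = w" by (rule sym)
    then have w_eq: "p \<odot>\<^bsub>M\<^esub> w \<oplus>\<^bsub>M\<^esub> (\<mu> \<odot>\<^bsub>M\<^esub> (\<ominus>\<^bsub>M\<^esub> n) \<oplus>\<^bsub>M\<^esub> \<mu> \<odot>\<^bsub>M\<^esub> d) = w"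
      using p(2) nC d(1) by (simp add: smult_r_distr)
    have "p \<odot>\<^bsub>M\<^esub> w \<in> set_sum M N (cyclic_submod L M d)" using jw[OF p(1)] NSS by blast
    moreover have "\<mu> \<odot>\<^bsub>M\<^esub> (\<ominus>\<^bsub>M\<^esub> n) \<in> set_sum M N (cyclic_submod L M d)"
      using submoduleD(5)[OF N p(2) submoduleD(4)[OF N nl(1)]] NSS by blast
    moreover have "\<mu> \<odot>\<^bsub>M\<^esub> d \<in> set_sum M N (cyclic_submod L M d)"
      using cyclic_submod_smult[OF p(2)] set_sum_upper2[OF N Ld] by blast
    ultimately have "p \<odot>\<^bsub>M\<^esub> w \<oplus>\<^bsub>M\<^esub> (\<mu> \<odot>\<^bsub>M\<^esub> (\<ominus>\<^bsub>M\<^esub> n) \<oplus>\<^bsub>M\<^esub> \<mu> \<odot>\<^bsub>M\<^esub> d)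
        \<in> set_sum M N (cyclic_submod L M d)"
      using submoduleD(3)[OF SS] by blast
    then show ?thesis by (simp only: w_eq)
  qed
qed

lemma set_sum_maximal_avoiding_eq_carrier:
  assumes D: "rad_splitting L F e" and N: "submodule L M N" and rad: "radA_mod L M \<subseteq> N"
    and d: "d \<in> carrier M" "d \<notin> N"
    and N_max: "\<And>N'. submodule L M N' \<Longrightarrow> N \<subseteq> N' \<Longrightarrow> d \<notin> N' \<Longrightarrow> N' = N"
  shows "set_sum M N (cyclic_submod L M d) = carrier M"
proof
  have F: "finite F" "\<forall>m\<in>F. maximal_left_ideal L m" "e \<in> F \<rightarrow> carrier L"
    "\<forall>m\<in>F. \<forall>l\<in>m. l \<otimes>\<^bsub>L\<^esub> e m \<in> jac_rad L" "\<one>\<^bsub>L\<^esub> \<ominus>\<^bsub>L\<^esub> finsum L e F \<in> jac_rad L"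
    using D by (simp_all add: rad_splitting_def)
  have Ld: "submodule L M (cyclic_submod L M d)" using cyclic_submod_submodule d(1) .
  have SS: "submodule L M (set_sum M N (cyclic_submod L M d))" using set_sum_submodule[OF N Ld] .
  then show "set_sum M N (cyclic_submod L M d) \<subseteq> carrier M" by (rule submoduleD(1))
  show "carrier M \<subseteq> set_sum M N (cyclic_submod L M d)"
  proof
    fix y assume y: "y \<in> carrier M"
    show "y \<in> set_sum M N (cyclic_submod L M d)"
    proof (rule submodule_mem_split_one[OF F(1) F(3) SS y])
      show "(\<one>\<^bsub>L\<^esub> \<ominus>\<^bsub>L\<^esub> finsum L e F) \<odot>\<^bsub>M\<^esub> y \<in> set_sum M N (cyclic_submod L M d)"
        using jac_rad_smult_in_radA_mod[OF F(5) y] rad set_sum_upper1[OF N Ld] by blast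
    next
      fix m assume m: "m \<in> F"
      have em: "e m \<in> carrier L" using F(3) m by blast
      show "e m \<odot>\<^bsub>M\<^esub> y \<in> set_sum M N (cyclic_submod L M d)"
      proof (rule mem_set_sum_maximal_avoiding[OF N d N_max])
        show "maximal_left_ideal L m" using F(2) m by blast
        show "e m \<odot>\<^bsub>M\<^esub> y \<in> carrier M" using em y by simp
        fix a assume a: "a \<in> m"
        then have "a \<in> carrier L" using F(2) m maximal_left_ideal_subset by blast
        then have "a \<odot>\<^bsub>M\<^esub> (e m \<odot>\<^bsub>M\<^esub> y) = (a \<otimes>\<^bsub>L\<^esub> e m) \<odot>\<^bsub>M\<^esub> y"
          using em y by (simp add: smult_assoc)
        moreover have "a \<otimes>\<^bsub>L\<^esub> e m \<in> jac_rad L" using F(4) m a by blast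
        ultimately show "a \<odot>\<^bsub>M\<^esub> (e m \<odot>\<^bsub>M\<^esub> y) \<in> N"
          using jac_rad_smult_in_radA_mod[OF _ y] rad by auto
      qed auto
    qed
  qed
qed

lemma simple_direct_summand:
  assumes D: "simple_submodule L M D" and N: "submodule L M N" and DN: "\<not> D \<subseteq> N"
    and sum: "set_sum M N D = carrier M"
  shows "direct_decomp L M D N" and "simple_mod L (M\<lparr>carrier := D\<rparr>)"
proof -
  have Ds: "submodule L M D" using D by (simp add: simple_submodule_def)
  have "D \<inter> N = {\<zero>\<^bsub>M\<^esub>}"
    using D submodule_Int[OF Ds N] DN unfolding simple_submodule_def by blast
  moreover have "set_sum M D N = carrier M"
    using sum set_sum_commute[OF submoduleD(1)[OF N] submoduleD(1)[OF Ds]] by simp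
  ultimately show "direct_decomp L M D N" using Ds N by (simp add: direct_decomp_def)
  show "simple_mod L (M\<lparr>carrier := D\<rparr>)" using simple_submodule_simple_mod[OF D] .
qed

text \<open>Some \<open>d = e m c\<close> stays outside \<open>rad M\<close>, \<open>L d\<close> is simple, and a submodule
  \<open>N \<supseteq> rad M\<close> maximal with \<open>d \<notin> N\<close> is a complement of \<open>L d\<close>.\<close>

lemma simple_summand_of_jac_rad_killed:
  assumes D: "rad_splitting L F e" and c: "c \<in> carrier M" "c \<notin> radA_mod L M"
    and kill: "\<And>\<rho>. \<rho> \<in> jac_rad L \<Longrightarrow> \<rho> \<odot>\<^bsub>M\<^esub> c = \<zero>\<^bsub>M\<^esub>"
  shows "\<exists>N N'. direct_decomp L M N N' \<and> simple_mod L (M\<lparr>carrier := N\<rparr>)"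
proof -
  have F: "finite F" "\<forall>m\<in>F. maximal_left_ideal L m" "e \<in> F \<rightarrow> carrier L"
    "\<forall>m\<in>F. \<forall>l\<in>m. l \<otimes>\<^bsub>L\<^esub> e m \<in> jac_rad L" "\<one>\<^bsub>L\<^esub> \<ominus>\<^bsub>L\<^esub> finsum L e F \<in> jac_rad L"
    using D by (simp_all add: rad_splitting_def)
  have R0: "\<zero>\<^bsub>M\<^esub> \<in> radA_mod L M" using submoduleD(2)[OF radA_mod_submodule] .
  have "\<exists>m\<in>F. e m \<odot>\<^bsub>M\<^esub> c \<notin> radA_mod L M"
  proof (rule ccontr)
    assume "\<not> ?thesis"
    then have "\<And>m. m \<in> F \<Longrightarrow> e m \<odot>\<^bsub>M\<^esub> c \<in> radA_mod L M" by blast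
    moreover have "(\<one>\<^bsub>L\<^esub> \<ominus>\<^bsub>L\<^esub> finsum L e F) \<odot>\<^bsub>M\<^esub> c \<in> radA_mod L M" using kill[OF F(5)] R0 by simp
    ultimately have "c \<in> radA_mod L M"
      by (rule submodule_mem_split_one[OF F(1) F(3) radA_mod_submodule c(1)])
    then show False using c(2) by contradiction
  qed
  then obtain m where m: "m \<in> F" and d_notin: "e m \<odot>\<^bsub>M\<^esub> c \<notin> radA_mod L M" by blast
  define d where "d = e m \<odot>\<^bsub>M\<^esub> c"
  have mm: "maximal_left_ideal L m" using F(2) m by blast
  have em: "e m \<in> carrier L" using F(3) m by blast
  have dC: "d \<in> carrier M" using em c(1) by (simp add: d_def)
  have d0: "d \<noteq> \<zero>\<^bsub>M\<^esub>" using d_notin R0 by (auto simp: d_def)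
  have "a \<odot>\<^bsub>M\<^esub> d = \<zero>\<^bsub>M\<^esub>" if a: "a \<in> m" for a
  proof -
    have "a \<odot>\<^bsub>M\<^esub> d = (a \<otimes>\<^bsub>L\<^esub> e m) \<odot>\<^bsub>M\<^esub> c"
      using a maximal_left_ideal_subset[OF mm] em c(1) by (simp add: d_def smult_assoc subsetD)
    also have "\<dots> = \<zero>\<^bsub>M\<^esub>" using kill F(4) m a by blast
    finally show ?thesis .
  qed
  then have simple: "simple_submodule L M (cyclic_submod L M d)"
    using cyclic_submod_simple[OF mm dC d0] by blast
  obtain N where N: "submodule L M N" "radA_mod L M \<subseteq> N" "d \<notin> N"
    and N_max: "\<forall>N'. submodule L M N' \<and> N \<subseteq> N' \<and> d \<notin> N' \<longrightarrow> N' = N"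
    using exists_maximal_submodule_avoiding[OF radA_mod_submodule d_notin[folded d_def]] by blast
  have "set_sum M N (cyclic_submod L M d) = carrier M"
    using set_sum_maximal_avoiding_eq_carrier[OF D N(1,2) dC N(3)] N_max by blast
  moreover have "\<not> cyclic_submod L M d \<subseteq> N" using cyclic_submod_self[OF dC] N(3) by blast
  ultimately show ?thesis using simple_direct_summand[OF simple N(1)] by blast
qed

end

section \<open>Exactness of the sequence under F\<close>

lemma radA_mod_reflected:
  assumes D: "rad_splitting L F e" and lmC: "lmodule L C" and lmB: "lmodule L B"
    and hom: "mod_hom L C B \<alpha>" and inj: "inj_on \<alpha> (carrier C)"
    and killB: "\<And>\<rho> y. \<rho> \<in> jac_rad L \<Longrightarrow> y \<in> radA_mod L B \<Longrightarrow> \<rho> \<odot>\<^bsub>B\<^esub> y = \<zero>\<^bsub>B\<^esub>"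
    and no_simple: "\<not> (\<exists>N N'. direct_decomp L C N N' \<and> simple_mod L (C\<lparr>carrier := N\<rparr>))"
    and c: "c \<in> carrier C" and ac: "\<alpha> c \<in> radA_mod L B"
  shows "c \<in> radA_mod L C"
proof (rule ccontr)
  assume nc: "c \<notin> radA_mod L C"
  interpret C: lmod L C using lmC by (rule lmodI)
  have "\<rho> \<odot>\<^bsub>C\<^esub> c = \<zero>\<^bsub>C\<^esub>" if \<rho>: "\<rho> \<in> jac_rad L" for \<rho>
  proof -
    have \<rho>c: "\<rho> \<in> carrier L" using \<rho> jac_rad_subset[of L] by blast
    have "\<alpha> (\<rho> \<odot>\<^bsub>C\<^esub> c) = \<rho> \<odot>\<^bsub>B\<^esub> \<alpha> c" using hom \<rho>c c by (simp add: mod_hom_def)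
    also have "\<dots> = \<alpha> \<zero>\<^bsub>C\<^esub>" using killB[OF \<rho> ac] mod_hom_zero[OF lmC lmB hom] by simp
    finally show ?thesis using inj \<rho>c c by (auto dest: inj_onD)
  qed
  then show False using C.simple_summand_of_jac_rad_killed[OF D c nc] no_simple by blast
qed

lemma F_U_exact_of_short_exact:
  assumes lm: "lmodule L B" "lmodule L S" and SE: "short_exact L C B S \<alpha> \<beta>"
    and rad_S: "radA_mod L S = {\<zero>\<^bsub>S\<^esub>}"
    and reflect: "\<And>c. c \<in> carrier C \<Longrightarrow> \<alpha> c \<in> radA_mod L B \<Longrightarrow> c \<in> radA_mod L C"
  shows "F_U_exact L C B S \<alpha> \<beta>"
proof -
  interpret B: lmod L B using lm(1) by (rule lmodI)
  interpret S: lmod L S using lm(2) by (rule lmodI)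
  have surj: "\<beta> ` carrier B = carrier S" and ker: "\<alpha> ` carrier C = {b\<in>carrier B. \<beta> b = \<zero>\<^bsub>S\<^esub>}"
    using SE by (simp_all add: short_exact_def)
  have rB0: "\<zero>\<^bsub>B\<^esub> \<in> radA_mod L B" using submoduleD(2)[OF B.radA_mod_submodule] .
  show ?thesis unfolding F_U_exact_def
  proof (intro conjI ballI impI)
    fix c assume "c \<in> carrier C" "\<alpha> c \<in> radA_mod L B"
    then show "c \<in> radA_mod L C" by (rule reflect)
  next
    fix c assume "c \<in> carrier C"
    then show "\<beta> (\<alpha> c) \<in> radA_mod L S" using ker rad_S by blast
  next
    fix b assume b: "b \<in> carrier B" "\<beta> b \<in> radA_mod L S"
    then obtain c where c: "c \<in> carrier C" "b = \<alpha> c" using ker rad_S by blast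
    then have "b \<ominus>\<^bsub>B\<^esub> \<alpha> c = \<zero>\<^bsub>B\<^esub>" using b(1) by (simp add: B.M.r_neg B.M.minus_eq)
    then show "\<exists>c\<in>carrier C. b \<ominus>\<^bsub>B\<^esub> \<alpha> c \<in> radA_mod L B" using c(1) rB0 by metis
  next
    fix s assume s: "s \<in> carrier S"
    then obtain b where b: "b \<in> carrier B" "s = \<beta> b" using surj by blast
    then have "s \<ominus>\<^bsub>S\<^esub> \<beta> b = \<zero>\<^bsub>S\<^esub>" using s by (simp add: S.M.r_neg S.M.minus_eq)
    then show "\<exists>b\<in>carrier B. s \<ominus>\<^bsub>S\<^esub> \<beta> b \<in> radA_mod L S" using b(1) rad_S by blast
  qed
qed

lemma F_V_exact_of_short_exact:
  assumes lm: "lmodule L C" "lmodule L B" "lmodule L S" and SE: "short_exact L C B S \<alpha> \<beta>"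
    and rad_S: "radA_mod L S = {\<zero>\<^bsub>S\<^esub>}"
    and reflect: "\<And>c. c \<in> carrier C \<Longrightarrow> \<alpha> c \<in> radA_mod L B \<Longrightarrow> c \<in> radA_mod L C"
  shows "F_V_exact L C B S \<alpha> \<beta>"
proof -
  interpret C: lmod L C using lm(1) by (rule lmodI)
  interpret B: lmod L B using lm(2) by (rule lmodI)
  have homa: "mod_hom L C B \<alpha>" and homb: "mod_hom L B S \<beta>" and inj: "inj_on \<alpha> (carrier C)"
    and ker: "\<alpha> ` carrier C = {b\<in>carrier B. \<beta> b = \<zero>\<^bsub>S\<^esub>}"
    using SE by (simp_all add: short_exact_def)
  have rC: "radA_mod L C \<subseteq> carrier C" using submoduleD(1)[OF C.radA_mod_submodule] .
  have rB: "radA_mod L B \<subseteq> carrier B" using submoduleD(1)[OF B.radA_mod_submodule] .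
  have rB0: "\<zero>\<^bsub>B\<^esub> \<in> radA_mod L B" using submoduleD(2)[OF B.radA_mod_submodule] .
  show ?thesis unfolding F_V_exact_def
  proof (intro conjI ballI impI)
    fix c assume c: "c \<in> radA_mod L C" "\<alpha> c = \<zero>\<^bsub>B\<^esub>"
    have "c \<in> carrier C" using c(1) rC by blast
    then show "c = \<zero>\<^bsub>C\<^esub>"
      using inj_onD[OF inj, of c "\<zero>\<^bsub>C\<^esub>"] c(2) mod_hom_zero[OF lm(1,2) homa] by simp
  next
    fix c assume "c \<in> radA_mod L C"
    then show "\<beta> (\<alpha> c) = \<zero>\<^bsub>S\<^esub>" using ker rC by blast
  next
    fix b assume b: "b \<in> radA_mod L B" "\<beta> b = \<zero>\<^bsub>S\<^esub>"
    then obtain c where c: "c \<in> carrier C" "b = \<alpha> c" using ker rB by blast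
    then show "\<exists>c\<in>radA_mod L C. \<alpha> c = b" using reflect b(1) by blast
  next
    fix s assume "s \<in> radA_mod L S"
    then show "\<exists>b\<in>radA_mod L B. \<beta> b = s" using rad_S rB0 mod_hom_zero[OF lm(2,3) homb] by auto
  qed
qed

theorem lemma3p1:
  fixes \<Lambda> :: "'a ring"
    and C :: "('a, 'c) module" and B :: "('a, 'b) module" and S :: "('a, 's) module"
    and \<alpha> :: "'c \<Rightarrow> 'b" and \<beta> :: "'b \<Rightarrow> 's"
  assumes "artin_algebra \<Lambda>" and "selfinjective \<Lambda>" and "infinite_rep_type \<Lambda>"
    and "\<forall>x\<in>jac_rad \<Lambda>. \<forall>y\<in>jac_rad \<Lambda>. \<forall>z\<in>jac_rad \<Lambda>. x \<otimes>\<^bsub>\<Lambda>\<^esub> y \<otimes>\<^bsub>\<Lambda>\<^esub> z = \<zero>\<^bsub>\<Lambda>\<^esub>"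
    and "A_module \<Lambda> C" and "A_module \<Lambda> B" and "A_module \<Lambda> S"
    and "short_exact \<Lambda> C B S \<alpha> \<beta>"
    and "simple_mod \<Lambda> S"
    and "\<not> (\<exists>N N'. direct_decomp \<Lambda> C N N' \<and> simple_mod \<Lambda> (C\<lparr>carrier := N\<rparr>))"
  shows "F_exact \<Lambda> C B S \<alpha> \<beta>"
proof -
  note A = assms(1) and rad3 = assms(4) and SE = assms(8) and no_simple = assms(10)
  have r: "ring \<Lambda>" using A by (simp add: artin_algebra_def)
  have lm: "lmodule \<Lambda> C" "lmodule \<Lambda> B" "lmodule \<Lambda> S"
    using assms(5-7) by (simp_all add: A_module_def)
  obtain F e where D: "rad_splitting \<Lambda> F e" using artin_algebra_rad_splitting[OF A] by blast
  have hom: "mod_hom \<Lambda> C B \<alpha>" and inj: "inj_on \<alpha> (carrier C)" using SE by (simp_all add: short_exact_def)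
  have "radA_mod \<Lambda> S = {\<zero>\<^bsub>S\<^esub>}" using lmod.radA_mod_simple[OF lmodI[OF lm(3)] assms(9)] .
  moreover have "c \<in> radA_mod \<Lambda> C" if "c \<in> carrier C" "\<alpha> c \<in> radA_mod \<Lambda> B" for c
    using radA_mod_reflected[OF D lm(1,2) hom inj _ no_simple that]
      A_module_jac_rad_kills_radA_mod[OF r rad3 D assms(6)] by blast
  ultimately show ?thesis
    using F_U_exact_of_short_exact[OF lm(2,3) SE] F_V_exact_of_short_exact[OF lm SE]
    by (simp add: F_exact_def)
qed

end
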